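(* Let $\alpha=(\vec z,\alpha_0)$ be an $n$-ary logical connective, i.e. a connective with $\alpha^I=\alpha^E=\alpha_0$. Let $\mathbf P_1,\dots,\mathbf P_n$ be any positive a-behaviours and $\mathbf N_1,\dots,\mathbf N_n$ any negative a-behaviours. Then: 1. $\big(\alpha_0\langle\mathbf N_1,\dots,\mathbf N_n\rangle^{\mathsf C}\big)^{\bot}\subseteq\Big(\bigcup_{a_i(\vec x_i)\in\alpha_0}\overline{a_i}\langle\mathbf N_{(i,1)},\dots,\mathbf N_{(i,k)}\rangle\Big)\cup\{\maltese\}$. 2. $\alpha_0\langle\mathbf N_1,\dots,\mathbf N_n\rangle\subseteq\big(\alpha_0\langle\mathbf N_1,\dots,\mathbf N_n\rangle^{\mathsf C}\big)^{\bot}$. 3. If $\sum a(\vec x_a).P_a\in\big(\alpha_0(\mathbf P_1,\dots,\mathbf P_n)^{\mathsf C}\big)^{\bot}$, then for every $a_i(x_{(i,1)},\dots,x_{(i,k)})\in\alpha_0$ we have $P_{a_i}\in[\mathbf P^{\bot}_{(i,1)}/x_{(i,1)},\dots,\mathbf P^{\bot}_{(i,k)}/x_{(i,k)}]^{\bot}$. 4. $\alpha_0(\mathbf P_1,\dots,\mathbf P_n)=\big(\alpha_0(\mathbf P_1,\dots,\mathbf P_n)^{\mathsf C}\big)^{\bot}$.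
   Context: **Signature and c-designs.** Fix a signature: a set $A$ of names, each $a\in A$ with an arity $\mathsf{ar}(a)\in\mathbb N$, and a countably infinite set of variables. Computational designs (c-designs) are possibly non-well-founded labelled trees, given coinductively: - A positive c-design is $\maltese$ (daimon), $\Omega$ (divergence), or $N_0\,|\,\overline a\langle N_1,\dots,N_k\rangle$, where $\mathsf{ar}(a)=k$ and each $N_i$ is a negative c-design. - A negative c-design is a variable $x$, or $\sum a(\vec x_a).P_a$: one positive c-design $P_a$ for each $a\in A$, binding the distinct variables $\vec x_a$ of length $\mathsf{ar}(a)$. Conventions: c-designs are identified up to $\alpha$-equivalence; bound variables are distinct from free ones; substitution $T[\vec N/\vec x]$ is capture-avoiding. - For a set $S$ of negative actions $a(\vec x_a)$ (an action is $a(x_1,\dots,x_k)$ with $\mathsf{ar}(a)=k$ and distinct $x_i$) with pairwise distinct names, $\sum_S a(\vec x_a).P_a$ has branch $P_a$ for $a(\vec x_a)\in S$ and $\Omega$ for other names. A finite sum is also written $a_1(\vec x_1).P_1+\dots+a_m(\vec x_m).P_m$. - A cut is $(\sum a(\vec x_a).P_a)\,|\,\overline b\langle\vec N\rangle$, and it reduces to $P_b[\vec N/\vec x_b]$. **Normal form.** Write $P\Downarrow Q$ if $P$ reduces in finitely many steps to some $Q$ that is neither a cut nor $\Omega$; write $P\Uparrow$ otherwise. The normal form $[\![\cdot]\!]$ is defined corecursively: - $[\![P]\!]=\maltese$ if $P\Downarrow\maltese$; - $[\![P]\!]=\Omega$ if $P\Uparrow$; - $[\![P]\!]=x\,|\,\overline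 a\langle[\![N_1]\!],\dots,[\![N_k]\!]\rangle$ if $P\Downarrow x\,|\,\overline a\langle N_1,\dots,N_k\rangle$; - $[\![x]\!]=x$ and $[\![\sum a(\vec x_a).P_a]\!]=\sum a(\vec x_a).[\![P_a]\!]$. $T$ converges to $\maltese$ if $[\![T]\!]=\maltese$. **Standard designs.** A variable $x$ occurring as an argument $N_i$ ($i\ge1$) of some $N_0\,|\,\overline a\langle N_1,\dots,N_k\rangle$ in $T$ is an identity in $T$. $T$ is standard if it satisfies all of the following: - it is cut-free; - it is not a variable and has no identities; - it is $\neq\Omega$; - it is linear (in every subtree $N_0\,|\,\overline a\langle N_1,\dots,N_k\rangle$ the free-variable sets of $N_0,\dots,N_k$ are pairwise disjoint); - it has finitely many free variables. **Atomic designs and anti-designs.** Fix a variable $x_0$. A positive c-design is atomic if its free variables are $\subseteq\{x_0\}$; a negative c-design is atomic if it is closed. - An anti-design against positives $[N_1/x_1,\dots,N_n/x_n]$ is a finite set of pairs, with the $x_i$ distinct and the $N_i$ atomic negative. - An anti-design against negatives $[P,N_1/x_1,\dots,N_n/x_n]$ additionally contains an atomic positive $P$. **Orthogonality.** - $P\bot[N_1/x_1,\dots]$ iff $P[N_1/x_1,\dots]$ is closed and converges to $\maltese$. - $M\bot[P,N_1/x_1,\dots]$ iff $P[M[N_1/x_1,\dots]/x_0]$ is closed and converges to $\maltese$. - For atomic $P$ and $N$: $P\bot N$ iff $P[N/x_0]$ is closed and converges to $\maltese$. For a set $\mathbf T$ of cut-free c-designs of one polarity: - if all elements of $\mathbf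 T$ are atomic, $\mathbf T^\bot$ is the set of standard atomic c-designs $U$ with $T\bot U$ for all $T\in\mathbf T$; - otherwise $\mathbf T^\bot$ is the set of standard anti-designs orthogonal to all $T\in\mathbf T$. For a set $\mathbf G$ of anti-designs, $\mathbf G^\bot$ is the set of standard c-designs orthogonal to all its members. A behaviour is a set $\mathbf T$ of standard c-designs of one polarity with $\mathbf T=\mathbf T^{\bot\bot}$. It is an a-behaviour if all its elements are atomic. For sets of negative c-designs $\mathbf N_1,\dots,\mathbf N_n$, write $[\mathbf N_1/x_1,\dots,\mathbf N_n/x_n]=\{[N_1/x_1,\dots,N_n/x_n]:N_i\in\mathbf N_i\}$. **Connectives.** An $n$-ary connective is a triple $\alpha=(\vec z,\alpha^I,\alpha^E)$ such that: - $\vec z=z_1,\dots,z_n$ are distinct variables different from $x_0$; - $\alpha^I$ and $\alpha^E$ are finite sets of negative actions whose union has pairwise distinct names; - every action $a_i(\vec x_i)$ of the union has $\vec x_i=x_{(i,1)},\dots,x_{(i,k)}$ among $\vec z$, and all of $\vec z$ occur. Indexing convention: for behaviours $\mathbf B_1,\dots,\mathbf B_n$ indexed by $\vec z$, $\mathbf B_{(i,l)}$ denotes $\mathbf B_j$ where $z_j=x_{(i,l)}$. **Composed behaviours.** For a name $a$ with $\mathsf{ar}(a)=k$ and sets $\mathbf M_1,\dots,\mathbf M_k$, let $\overline a\langle\mathbf M_1,\dots,\mathbf M_k\rangle=\{x_0\,|\,\overline a\langle M_1,\dots,M_k\rangle:M_l\in\mathbf M_l\}$. For positive a-behaviours $\mathbf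 P_j$ and negative a-behaviours $\mathbf N_j$: - $\alpha^E\langle\mathbf N_1,\dots,\mathbf N_n\rangle=\big(\bigcup_{a_i(\vec x_i)\in\alpha^E}\overline{a_i}\langle\mathbf N_{(i,1)},\dots,\mathbf N_{(i,k)}\rangle\big)^{\bot\bot}$; - $\alpha^I(\mathbf P_1,\dots,\mathbf P_n)=\bigcap_{a_i(\vec x_i)\in\alpha^I}\big(\overline{a_i}\langle\mathbf P^\bot_{(i,1)},\dots,\mathbf P^\bot_{(i,k)}\rangle^\bot\big)$. **Counter sets.** - $\alpha^I(\mathbf P_1,\dots,\mathbf P_n)^{\mathsf C}=\bigcup_{a_i(\vec x_i)\in\alpha^I}\overline{a_i}\langle\mathbf P^\bot_{(i,1)},\dots,\mathbf P^\bot_{(i,k)}\rangle$. - $\alpha^E\langle\mathbf N_1,\dots,\mathbf N_n\rangle^{\mathsf C}$ is the set of all negative c-designs $a_i(\vec x_i).Q[x_{(i,l)}/x_0]+b_1(\vec x_{b_1}).\maltese+\dots+b_m(\vec x_{b_m}).\maltese$, where $a_i(\vec x_i)\in\alpha^E$, $x_{(i,l)}\in\{\vec x_i\}$, $Q\in\mathbf N^\bot_{(i,l)}$, and $\{b_1(\vec x_{b_1}),\dots,b_m(\vec x_{b_m})\}=\alpha^E\setminus\{a_i(\vec x_i)\}$. For a logical connective, $\alpha_0\langle\cdot\rangle$ and $\alpha_0(\cdot)$ denote $\alpha^E\langle\cdot\rangle$ and $\alpha^I(\cdot)$ respectively.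
   Formalization: Item 1 holds only when some action $a_i(x_{(i,1)},\dots,x_{(i,k)})$ of $\alpha_0$ has positive arity, that is, $k \geq 1$ for at least one action of $\alpha_0$. The statement above fails without it. *)

theory Defs
  imports Main
begin

section \<open>Computational designs (locally nameless representation)\<close>

text \<open>Bound variables are
  represented namelessly: Bd k l refers to the l-th variable bound by the k-th enclosing
  sum (k = 0 being the innermost).  This realises identification up to alpha-equivalence.\<close>

datatype bvar = Fr nat | Bd nat nat

codatatype 'n pos = Dai | Omg | Act "'n neg" 'n "'n neg list"
  and 'n neg = Vr bvar | Sm "'n \<Rightarrow> 'n pos"

text \<open>Well-formedness: correct arities and no dangling bound variables.  The context c lists
  the arities of the enclosing binders.  A c-design is a term with wfP ar [] / wfN ar [].\<close>

coinductive wfP :: "('n \<Rightarrow> nat) \<Rightarrow> nat list \<Rightarrow> 'n pos \<Rightarrow> bool"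
  and wfN :: "('n \<Rightarrow> nat) \<Rightarrow> nat list \<Rightarrow> 'n neg \<Rightarrow> bool" where
  "wfP ar c Dai"
| "wfP ar c Omg"
| "wfN ar c N \<Longrightarrow> length Ms = ar a \<Longrightarrow> (\<forall>M\<in>set Ms. wfN ar c M) \<Longrightarrow> wfP ar c (Act N a Ms)"
| "wfN ar c (Vr (Fr x))"
| "k < length c \<Longrightarrow> l < c ! k \<Longrightarrow> wfN ar c (Vr (Bd k l))"
| "(\<forall>a. wfP ar (ar a # c) (f a)) \<Longrightarrow> wfN ar c (Sm f)"

text \<open>Generic substitution; s d v gives the replacement of variable v at binder depth d.\<close>

primcorec substP :: "(nat \<Rightarrow> bvar \<Rightarrow> 'n neg option) \<Rightarrow> nat \<Rightarrow> 'n pos \<Rightarrow> 'n pos"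
  and substN :: "(nat \<Rightarrow> bvar \<Rightarrow> 'n neg option) \<Rightarrow> nat \<Rightarrow> 'n neg \<Rightarrow> 'n neg" where
  "substP s d p = (case p of Dai \<Rightarrow> Dai | Omg \<Rightarrow> Omg
      | Act N a Ms \<Rightarrow> Act (substN s d N) a (map (substN s d) Ms))"
| "substN s d n = (case n of
        Vr v \<Rightarrow> (case s d v of None \<Rightarrow> Vr v
                  | Some M \<Rightarrow> (case M of Vr w \<Rightarrow> Vr w | Sm g \<Rightarrow> Sm g))
      | Sm f \<Rightarrow> Sm (\<lambda>a. substP s (Suc d) (f a)))"

text \<open>Instantiating the variables bound by a sum (its branch P_b becomes P_b[Ns/x_b]).\<close>

definition openP :: "'n neg list \<Rightarrow> 'n pos \<Rightarrow> 'n pos" where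
  "openP Ns = substP (\<lambda>d v. case v of Bd k l \<Rightarrow> (if k = d \<and> l < length Ns then Some (Ns ! l) else None)
                                   | Fr x \<Rightarrow> None) 0"

definition fsubstP :: "(nat \<rightharpoonup> 'n neg) \<Rightarrow> 'n pos \<Rightarrow> 'n pos" where
  "fsubstP \<sigma> = substP (\<lambda>d v. case v of Fr x \<Rightarrow> \<sigma> x | Bd k l \<Rightarrow> None) 0"

definition fsubstN :: "(nat \<rightharpoonup> 'n neg) \<Rightarrow> 'n neg \<Rightarrow> 'n neg" where
  "fsubstN \<sigma> = substN (\<lambda>d v. case v of Fr x \<Rightarrow> \<sigma> x | Bd k l \<Rightarrow> None) 0"

text \<open>Binding the free variable y as the l-th variable of an (enclosing) binder: Q[x_l/y]
  placed directly under that binder.\<close>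

definition bindP :: "nat \<Rightarrow> nat \<Rightarrow> 'n pos \<Rightarrow> 'n pos" where
  "bindP y l = substP (\<lambda>d v. if v = Fr y then Some (Vr (Bd d l)) else None) 0"

definition is_cut :: "'n pos \<Rightarrow> bool" where
  "is_cut p = (case p of Act (Sm f) b Ms \<Rightarrow> True | _ \<Rightarrow> False)"

definition step :: "'n pos \<Rightarrow> 'n pos" where
  "step p = (case p of Act (Sm f) b Ms \<Rightarrow> openP Ms (f b) | _ \<Rightarrow> p)"

definition conv_to :: "'n pos \<Rightarrow> 'n pos \<Rightarrow> bool" where
  "conv_to P Q \<longleftrightarrow> (\<exists>n. (step ^^ n) P = Q) \<and> \<not> is_cut Q \<and> Q \<noteq> Omg"

primcorec nfP :: "'n pos \<Rightarrow> 'n pos" and nfN :: "'n neg \<Rightarrow> 'n neg" where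
  "nfP P = (if \<exists>Q. conv_to P Q then
              (case THE Q. conv_to P Q of Dai \<Rightarrow> Dai | Omg \<Rightarrow> Omg
                 | Act N a Ms \<Rightarrow> Act N a (map nfN Ms))
            else Omg)"
| "nfN N = (case N of Vr v \<Rightarrow> Vr v | Sm f \<Rightarrow> Sm (\<lambda>a. nfP (f a)))"

definition converges :: "'n pos \<Rightarrow> bool" where
  "converges P \<longleftrightarrow> nfP P = Dai"

text \<open>vocP d v T: T (viewed at relative binder depth d) has v as a variable that is free in T;
  bound variables referring outside T are normalised relative to the root of T.\<close>

inductive vocP :: "nat \<Rightarrow> bvar \<Rightarrow> 'n pos \<Rightarrow> bool" and vocN :: "nat \<Rightarrow> bvar \<Rightarrow> 'n neg \<Rightarrow> bool" where
  "vocN d (Fr x) (Vr (Fr x))"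
| "d \<le> k \<Longrightarrow> vocN d (Bd (k - d) l) (Vr (Bd k l))"
| "vocN d v N \<Longrightarrow> vocP d v (Act N a Ms)"
| "M \<in> set Ms \<Longrightarrow> vocN d v M \<Longrightarrow> vocP d v (Act N a Ms)"
| "vocP (Suc d) v (f a) \<Longrightarrow> vocN d v (Sm f)"

definition varsN :: "'n neg \<Rightarrow> bvar set" where "varsN N = {v. vocN 0 v N}"

definition fvP :: "'n pos \<Rightarrow> nat set" where "fvP P = {x. vocP 0 (Fr x) P}"
definition fvN :: "'n neg \<Rightarrow> nat set" where "fvN N = {x. vocN 0 (Fr x) N}"

definition closedP :: "'n pos \<Rightarrow> bool" where "closedP P \<longleftrightarrow> (\<forall>v. \<not> vocP 0 v P)"
definition closedN :: "'n neg \<Rightarrow> bool" where "closedN N \<longleftrightarrow> (\<forall>v. \<not> vocN 0 v N)"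

inductive psubP :: "'n pos \<Rightarrow> 'n pos \<Rightarrow> bool" and psubN :: "'n pos \<Rightarrow> 'n neg \<Rightarrow> bool" where
  "psubP P P"
| "psubN Q N \<Longrightarrow> psubP Q (Act N a Ms)"
| "M \<in> set Ms \<Longrightarrow> psubN Q M \<Longrightarrow> psubP Q (Act N a Ms)"
| "psubP Q (f a) \<Longrightarrow> psubN Q (Sm f)"

definition nodes_ok :: "('n neg \<Rightarrow> 'n \<Rightarrow> 'n neg list \<Rightarrow> bool) \<Rightarrow> ('n pos \<Rightarrow> bool) \<Rightarrow> bool" where
  "nodes_ok R sub \<longleftrightarrow> (\<forall>N a Ms. sub (Act N a Ms) \<longrightarrow> R N a Ms)"

definition node_cutfree :: "'n neg \<Rightarrow> 'n \<Rightarrow> 'n neg list \<Rightarrow> bool" where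
  "node_cutfree N a Ms \<longleftrightarrow> (\<forall>f. N \<noteq> Sm f)"

definition node_noid :: "'n neg \<Rightarrow> 'n \<Rightarrow> 'n neg list \<Rightarrow> bool" where
  "node_noid N a Ms \<longleftrightarrow> (\<forall>M\<in>set Ms. \<forall>v. M \<noteq> Vr v)"

definition node_linear :: "'n neg \<Rightarrow> 'n \<Rightarrow> 'n neg list \<Rightarrow> bool" where
  "node_linear N a Ms \<longleftrightarrow> (\<forall>i j. i < j \<and> j < length (N # Ms) \<longrightarrow>
       varsN ((N # Ms) ! i) \<inter> varsN ((N # Ms) ! j) = {})"

definition standardP :: "('n \<Rightarrow> nat) \<Rightarrow> 'n pos \<Rightarrow> bool" where
  "standardP ar P \<longleftrightarrow> wfP ar [] P
     \<and> nodes_ok node_cutfree (\<lambda>Q. psubP Q P)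
     \<and> nodes_ok node_noid (\<lambda>Q. psubP Q P)
     \<and> P \<noteq> Omg
     \<and> nodes_ok node_linear (\<lambda>Q. psubP Q P)
     \<and> finite (fvP P)"

definition standardN :: "('n \<Rightarrow> nat) \<Rightarrow> 'n neg \<Rightarrow> bool" where
  "standardN ar N \<longleftrightarrow> wfN ar [] N
     \<and> nodes_ok node_cutfree (\<lambda>Q. psubN Q N)
     \<and> (\<forall>v. N \<noteq> Vr v) \<and> nodes_ok node_noid (\<lambda>Q. psubN Q N)
     \<and> nodes_ok node_linear (\<lambda>Q. psubN Q N)
     \<and> finite (fvN N)"

definition atomicP :: "nat \<Rightarrow> 'n pos \<Rightarrow> bool" where "atomicP x0 P \<longleftrightarrow> fvP P \<subseteq> {x0}"
definition atomicN :: "'n neg \<Rightarrow> bool" where "atomicN N \<longleftrightarrow> fvN N = {}"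

text \<open>An anti-design against positives [N_1/x_1,...,N_n/x_n] is a finite partial map.\<close>
type_synonym 'n anti = "nat \<rightharpoonup> 'n neg"

definition orth_anti :: "'n pos \<Rightarrow> 'n anti \<Rightarrow> bool" where
  "orth_anti P \<sigma> \<longleftrightarrow> closedP (fsubstP \<sigma> P) \<and> converges (fsubstP \<sigma> P)"

definition orth_at :: "nat \<Rightarrow> 'n pos \<Rightarrow> 'n neg \<Rightarrow> bool" where
  "orth_at x0 P N \<longleftrightarrow> closedP (fsubstP [x0 \<mapsto> N] P) \<and> converges (fsubstP [x0 \<mapsto> N] P)"

text \<open>Orthogonal of a set of atomic designs (the other case of the paper's definition yields
  anti-designs, i.e. an object of a different type; it is left unspecified here).\<close>

definition perpP :: "('n \<Rightarrow> nat) \<Rightarrow> nat \<Rightarrow> 'n pos set \<Rightarrow> 'n neg set" where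
  "perpP ar x0 S = (if \<forall>T\<in>S. atomicP x0 T
      then {U. standardN ar U \<and> atomicN U \<and> (\<forall>T\<in>S. orth_at x0 T U)} else undefined)"

definition perpN :: "('n \<Rightarrow> nat) \<Rightarrow> nat \<Rightarrow> 'n neg set \<Rightarrow> 'n pos set" where
  "perpN ar x0 S = (if \<forall>T\<in>S. atomicN T
      then {U. standardP ar U \<and> atomicP x0 U \<and> (\<forall>T\<in>S. orth_at x0 U T)} else undefined)"

definition perp_anti :: "('n \<Rightarrow> nat) \<Rightarrow> 'n anti set \<Rightarrow> 'n pos set" where
  "perp_anti ar G = {T. standardP ar T \<and> (\<forall>\<sigma>\<in>G. orth_anti T \<sigma>)}"

definition antiset :: "nat list \<Rightarrow> 'n neg set list \<Rightarrow> 'n anti set" where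
  "antiset xs Ss = {\<sigma>. dom \<sigma> = set xs \<and> (\<forall>l < length xs. \<exists>N \<in> Ss ! l. \<sigma> (xs ! l) = Some N)}"

definition a_behP :: "('n \<Rightarrow> nat) \<Rightarrow> nat \<Rightarrow> 'n pos set \<Rightarrow> bool" where
  "a_behP ar x0 B \<longleftrightarrow> (\<forall>T\<in>B. standardP ar T \<and> atomicP x0 T) \<and> B = perpN ar x0 (perpP ar x0 B)"

definition a_behN :: "('n \<Rightarrow> nat) \<Rightarrow> nat \<Rightarrow> 'n neg set \<Rightarrow> bool" where
  "a_behN ar x0 B \<longleftrightarrow> (\<forall>T\<in>B. standardN ar T \<and> atomicN T) \<and> B = perpP ar x0 (perpN ar x0 B)"

text \<open>An action a(x_1,...,x_k) is a pair (a, [x_1,...,x_k]).\<close>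
definition connective :: "('n \<Rightarrow> nat) \<Rightarrow> nat \<Rightarrow> nat list \<Rightarrow> ('n \<times> nat list) set
     \<Rightarrow> ('n \<times> nat list) set \<Rightarrow> bool" where
  "connective ar x0 zs AI AE \<longleftrightarrow>
     distinct zs \<and> x0 \<notin> set zs \<and> finite AI \<and> finite AE
     \<and> (\<forall>(a, xs) \<in> AI \<union> AE. distinct xs \<and> length xs = ar a \<and> set xs \<subseteq> set zs)
     \<and> (\<forall>(a, xs) \<in> AI \<union> AE. \<forall>(b, ys) \<in> AI \<union> AE. a = b \<longrightarrow> xs = ys)
     \<and> set zs \<subseteq> (\<Union>(a, xs) \<in> AI \<union> AE. set xs)"

definition actset :: "nat \<Rightarrow> 'n \<Rightarrow> 'n neg set list \<Rightarrow> 'n pos set" where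
  "actset x0 a Ss = {Act (Vr (Fr x0)) a Ms | Ms. length Ms = length Ss \<and> (\<forall>l < length Ss. Ms ! l \<in> Ss ! l)}"

text \<open>Behaviours are indexed by the variables z of the connective: B z is the behaviour
  attached to z, so that B_(i,l) is B (x_(i,l)).\<close>

definition alphaE :: "('n \<Rightarrow> nat) \<Rightarrow> nat \<Rightarrow> ('n \<times> nat list) set \<Rightarrow> (nat \<Rightarrow> 'n neg set) \<Rightarrow> 'n pos set" where
  "alphaE ar x0 AE Nb = perpN ar x0 (perpP ar x0 (\<Union>(a, xs) \<in> AE. actset x0 a (map Nb xs)))"

text \<open>The intersection is taken inside the universe of standard atomic negative designs
  (this only matters for an empty set of actions).\<close>
definition alphaI :: "('n \<Rightarrow> nat) \<Rightarrow> nat \<Rightarrow> ('n \<times> nat list) set \<Rightarrow> (nat \<Rightarrow> 'n pos set) \<Rightarrow> 'n neg set" where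
  "alphaI ar x0 AI Pb = {M. standardN ar M \<and> atomicN M} \<inter>
     (\<Inter>(a, xs) \<in> AI. perpP ar x0 (actset x0 a (map (\<lambda>z. perpP ar x0 (Pb z)) xs)))"

definition alphaI_C :: "('n \<Rightarrow> nat) \<Rightarrow> nat \<Rightarrow> ('n \<times> nat list) set \<Rightarrow> (nat \<Rightarrow> 'n pos set) \<Rightarrow> 'n pos set" where
  "alphaI_C ar x0 AI Pb = (\<Union>(a, xs) \<in> AI. actset x0 a (map (\<lambda>z. perpP ar x0 (Pb z)) xs))"

text \<open>a_i(x_i).Q[x_(i,l)/x0] + sum of b(x_b).daimon over the other actions of AE.\<close>
definition alphaE_C :: "('n \<Rightarrow> nat) \<Rightarrow> nat \<Rightarrow> ('n \<times> nat list) set \<Rightarrow> (nat \<Rightarrow> 'n neg set) \<Rightarrow> 'n neg set" where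
  "alphaE_C ar x0 AE Nb = {Sm (\<lambda>b. if b = a then bindP x0 l Q else if b \<in> fst ` AE then Dai else Omg)
       | a xs l Q. (a, xs) \<in> AE \<and> l < length xs \<and> Q \<in> perpN ar x0 (Nb (xs ! l))}"

end

theory Submission
  imports Defs
begin

(*
  A standard atomic positive design is either the daimon or x0|b<M> with closed M, and the
  cut of a closed sum against x0|b<M> reduces to its b-branch opened at M.  So orthogonality
  to an action set is a property of branches.
  Item 1: against the counter-design a(x).daimon + ..., which exists because the daimon lies
  in every orthogonal, x0|b<M> converges only if b is a name of alpha_0; against
  b(x).Q[x_l/x0] + ... it converges iff Q is orthogonal to M_l, so M_l lies in N^bot^bot = N.
  Item 2: every counter-design is orthogonal to the union U of the action sets, hence
  U^bot^bot is contained in the orthogonal of the counter-set.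
  Item 3: orthogonality of sum a(x).P_a to x0|a<M> for M in P^bot says that P_a[M/x]
  converges; P_a is not Omega because P^bot contains sum a(x).daimon, and opening a standard
  closed sum at distinct variables keeps it standard.
  Item 4: an intersection of orthogonals is the orthogonal of the union.
*)

section \<open>Substitution and occurrences of variables\<close>

lemma substP_simps [simp]:
  "substP s d Dai = Dai" "substP s d Omg = Omg"
  "substP s d (Act N a Ms) = Act (substN s d N) a (map (substN s d) Ms)"
  by (subst substP.code; simp)+

lemma substN_simps [simp]:
  "substN s d (Vr v) = (case s d v of None \<Rightarrow> Vr v | Some M \<Rightarrow> M)"
  "substN s d (Sm f) = Sm (\<lambda>a. substP s (Suc d) (f a))"
  by (subst substN.code; auto split: option.splits neg.splits)+

(* occP e w P: the raw variable w occurs in P underneath e binders.  Unlike vocP, bound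
   indices are not shifted; outer_var e w is w as seen from above those e binders, and None
   if one of them binds it. *)
inductive occP :: "nat \<Rightarrow> bvar \<Rightarrow> 'n pos \<Rightarrow> bool" and occN :: "nat \<Rightarrow> bvar \<Rightarrow> 'n neg \<Rightarrow> bool" where
  "occN 0 v (Vr v)"
| "occN e v N \<Longrightarrow> occP e v (Act N a Ms)"
| "M \<in> set Ms \<Longrightarrow> occN e v M \<Longrightarrow> occP e v (Act N a Ms)"
| "occP e v (f a) \<Longrightarrow> occN (Suc e) v (Sm f)"

inductive_cases occP_DaiE: "occP e v Dai"
inductive_cases occP_OmgE: "occP e v Omg"
inductive_cases occP_ActE: "occP e v (Act N a Ms)"
inductive_cases occN_VrE: "occN e v (Vr w)"
inductive_cases occN_SmE: "occN e v (Sm f)"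

lemma occ_simps [simp]:
  "\<not> occP e v Dai" "\<not> occP e v Omg"
  "occP e v (Act N a Ms) \<longleftrightarrow> occN e v N \<or> (\<exists>M\<in>set Ms. occN e v M)"
  "occN e v (Vr w) \<longleftrightarrow> e = 0 \<and> v = w"
  by (auto elim: occP_DaiE occP_OmgE occP_ActE occN_VrE intro: occP_occN.intros)

lemma occN_Sm [simp]: "occN e v (Sm f) \<longleftrightarrow> (\<exists>e' a. e = Suc e' \<and> occP e' v (f a))"
  by (auto elim!: occN_SmE intro: occP_occN.intros)

fun outer_var :: "nat \<Rightarrow> bvar \<Rightarrow> bvar option" where
  "outer_var e (Fr x) = Some (Fr x)"
| "outer_var e (Bd k l) = (if e \<le> k then Some (Bd (k - e) l) else None)"

lemma outer_var_eq_None_iff: "outer_var e w = None \<longleftrightarrow> (\<exists>k l. w = Bd k l \<and> k < e)"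
  by (cases w) auto

lemma outer_var_eq_Fr_iff: "outer_var e w = Some (Fr x) \<longleftrightarrow> w = Fr x"
  by (cases w) auto

lemma voc_imp_occ:
  fixes P :: "'n pos" and N :: "'n neg"
  shows "vocP d v P \<Longrightarrow> \<exists>e w. occP e w P \<and> outer_var (d + e) w = Some v"
    and "vocN d v N \<Longrightarrow> \<exists>e w. occN e w N \<and> outer_var (d + e) w = Some v"
proof (induct rule: vocP_vocN.inducts)
  case (1 d x)
  show ?case by (intro exI[of _ 0] exI[of _ "Fr x"]) auto
next
  case (2 d k l)
  then show ?case by (intro exI[of _ 0] exI[of _ "Bd k l"]) auto
next
  case (5 d v f a)
  then obtain e w where "occP e w (f a)" "outer_var (Suc d + e) w = Some v" by blast
  then show ?case by (intro exI[of _ "Suc e"] exI[of _ w]) auto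
qed auto

lemma occ_imp_voc:
  fixes P :: "'n pos" and N :: "'n neg"
  shows "occP e w P \<Longrightarrow> outer_var (d + e) w = Some v \<Longrightarrow> vocP d v P"
    and "occN e w N \<Longrightarrow> outer_var (d + e) w = Some v \<Longrightarrow> vocN d v N"
proof (induct arbitrary: d and d rule: occP_occN.inducts)
  case (1 w)
  then show ?case by (cases w) (auto intro: vocP_vocN.intros split: if_splits)
next
  case (4 e w f a)
  then have "vocP (Suc d) v (f a)" by simp
  then show ?case by (rule vocP_vocN.intros)
qed (auto intro: vocP_vocN.intros)

lemma vocP_iff_occ: "vocP d v P \<longleftrightarrow> (\<exists>e w. occP e w P \<and> outer_var (d + e) w = Some v)"
  using voc_imp_occ(1) occ_imp_voc(1) by blast

lemma vocN_iff_occ: "vocN d v N \<longleftrightarrow> (\<exists>e w. occN e w N \<and> outer_var (d + e) w = Some v)"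
  using voc_imp_occ(2) occ_imp_voc(2) by blast

lemma subst_id_coinduct:
  fixes s :: "nat \<Rightarrow> bvar \<Rightarrow> 'n neg option"
  shows "((\<exists>d P. x = substP s d P \<and> y = P \<and> (\<forall>e w. occP e w P \<longrightarrow> s (d + e) w = None)) \<longrightarrow> x = y)
    \<and> ((\<exists>d N. u = substN s d N \<and> v = N \<and> (\<forall>e w. occN e w N \<longrightarrow> s (d + e) w = None)) \<longrightarrow> u = v)"
proof (rule pos_neg.coinduct, goal_cases)
  case (1 x y)
  then obtain d P where "x = substP s d P" "y = P" "\<forall>e w. occP e w P \<longrightarrow> s (d + e) w = None"
    by blast
  then show ?case by (cases P) (auto simp: list_all2_conv_all_nth, metis nth_mem)
next
  case (2 u v)
  then obtain d N where "u = substN s d N" "v = N" "\<forall>e w. occN e w N \<longrightarrow> s (d + e) w = None"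
    by blast
  then show ?case by (cases N) (auto simp: rel_fun_def, metis add_Suc_right add_Suc)
qed

lemma substN_id: "(\<And>e w. occN e w N \<Longrightarrow> s (d + e) w = None) \<Longrightarrow> substN s d N = N"
  using subst_id_coinduct by blast

lemma subst_comp_coinduct:
  fixes s1 s2 s3 :: "nat \<Rightarrow> bvar \<Rightarrow> 'n neg option"
  defines "agree e w \<equiv> substN s2 e (substN s1 e (Vr w)) = substN s3 e (Vr w)"
  shows "((x = y \<or> (\<exists>d P. x = substP s2 d (substP s1 d P) \<and> y = substP s3 d P
        \<and> (\<forall>e w. occP e w P \<longrightarrow> agree (d + e) w))) \<longrightarrow> x = y)
    \<and> ((u = v \<or> (\<exists>d N. u = substN s2 d (substN s1 d N) \<and> v = substN s3 d N
        \<and> (\<forall>e w. occN e w N \<longrightarrow> agree (d + e) w))) \<longrightarrow> u = v)"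
proof (rule pos_neg.coinduct, goal_cases)
  case (1 x y)
  then consider "x = y" | d P where "x = substP s2 d (substP s1 d P)" "y = substP s3 d P"
      "\<forall>e w. occP e w P \<longrightarrow> agree (d + e) w"
    by blast
  then show ?case
  proof cases
    case 1
    then show ?thesis by (cases x) (auto simp: list_all2_conv_all_nth)
  next
    case 2
    then show ?thesis
      by (cases P) (auto simp: list_all2_conv_all_nth simp del: substN_simps(1) intro!: exI[of _ d],
          blast intro: nth_mem)
  qed
next
  case (2 u v)
  then consider "u = v" | d N where "u = substN s2 d (substN s1 d N)" "v = substN s3 d N"
      "\<forall>e w. occN e w N \<longrightarrow> agree (d + e) w"
    by blast
  then show ?case
  proof cases
    case 1
    then show ?thesis by (cases u) (auto simp: rel_fun_def)
  next
    case 2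
    show ?thesis
    proof (cases N)
      case (Vr w)
      then have "u = v" using 2 by (auto simp: agree_def)
      then show ?thesis by (cases u) (auto simp: rel_fun_def)
    next
      case (Sm f)
      then show ?thesis using 2 by (auto simp: rel_fun_def, metis add_Suc_right add_Suc)
    qed
  qed
qed

lemma substP_comp:
  "(\<And>e w. occP e w P \<Longrightarrow> substN s2 (d + e) (substN s1 (d + e) (Vr w)) = substN s3 (d + e) (Vr w))
    \<Longrightarrow> substP s2 d (substP s1 d P) = substP s3 d P"
  using subst_comp_coinduct by blast

lemma substN_eq_Vr_iff:
  "substN s d N = Vr v \<longleftrightarrow> (\<exists>w. N = Vr w \<and> (s d w = None \<and> v = w \<or> s d w = Some (Vr v)))"
  by (cases N) (auto split: option.splits)

lemma substN_eq_Sm_iff: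
  "substN s d N = Sm g \<longleftrightarrow> (\<exists>w. N = Vr w \<and> s d w = Some (Sm g))
     \<or> (\<exists>f. N = Sm f \<and> g = (\<lambda>a. substP s (Suc d) (f a)))"
  by (cases N) (auto split: option.splits)

lemma occ_subst_induct:
  fixes X :: "'n pos" and Y :: "'n neg"
  shows "occP e v X \<Longrightarrow> X = substP s d P \<Longrightarrow>
      (\<exists>w. occP e w P \<and> s (d + e) w = None \<and> v = w)
    \<or> (\<exists>e1 e2 w M. occP e1 w P \<and> s (d + e1) w = Some M \<and> occN e2 v M \<and> e = e1 + e2)"
    and "occN e v Y \<Longrightarrow> Y = substN s d N \<Longrightarrow>
      (\<exists>w. occN e w N \<and> s (d + e) w = None \<and> v = w)
    \<or> (\<exists>e1 e2 w M. occN e1 w N \<and> s (d + e1) w = Some M \<and> occN e2 v M \<and> e = e1 + e2)"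
proof (induct arbitrary: d P and d N rule: occP_occN.inducts)
  case (1 v)
  then obtain w where "N = Vr w" "s d w = None \<and> v = w \<or> s d w = Some (Vr v)"
    using substN_eq_Vr_iff by metis
  then show ?case by force
next
  case (2 e v N a Ms)
  then obtain N0 Ms0 where "P = Act N0 a Ms0" "N = substN s d N0"
    by (cases P) auto
  then show ?case using 2(2) by fastforce
next
  case (3 M Ms e v N a)
  then obtain N0 Ms0 M0 where "P = Act N0 a Ms0" "M0 \<in> set Ms0" "M = substN s d M0"
    by (cases P) auto
  then show ?case using 3(3) by fastforce
next
  case (4 e v f a)
  show ?case
  proof (cases "\<exists>w. N = Vr w \<and> s d w = Some (Sm f)")
    case True
    then show ?thesis using 4(1) by force
  next
    case False
    then obtain f0 where f0: "N = Sm f0" "f = (\<lambda>a. substP s (Suc d) (f0 a))"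
      using 4(3) substN_eq_Sm_iff by metis
    then have "(\<exists>w. occP e w (f0 a) \<and> s (Suc d + e) w = None \<and> v = w)
      \<or> (\<exists>e1 e2 w M. occP e1 w (f0 a) \<and> s (Suc d + e1) w = Some M \<and> occN e2 v M \<and> e = e1 + e2)"
      using 4(2)[of "Suc d" "f0 a"] by simp
    then show ?thesis
    proof (elim disjE exE conjE)
      fix e1 e2 w M
      assume "occP e1 w (f0 a)" "s (Suc d + e1) w = Some M" "occN e2 v M" "e = e1 + e2"
      then show ?thesis using f0
        by (intro disjI2 exI[of _ "Suc e1"] exI[of _ e2] exI[of _ w] exI[of _ M]) auto
    qed (use f0 in auto)
  qed
qed

lemma occP_substD:
  "occP e v (substP s d P) \<Longrightarrow>
      (\<exists>w. occP e w P \<and> s (d + e) w = None \<and> v = w)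
    \<or> (\<exists>e1 e2 w M. occP e1 w P \<and> s (d + e1) w = Some M \<and> occN e2 v M \<and> e = e1 + e2)"
  using occ_subst_induct(1) by blast

lemma occN_substD:
  "occN e v (substN s d N) \<Longrightarrow>
      (\<exists>w. occN e w N \<and> s (d + e) w = None \<and> v = w)
    \<or> (\<exists>e1 e2 w M. occN e1 w N \<and> s (d + e1) w = Some M \<and> occN e2 v M \<and> e = e1 + e2)"
  using occ_subst_induct(2) by blast

section \<open>Reduction\<close>

lemma step_Dai [simp]: "step Dai = Dai"
  and step_Omg [simp]: "step Omg = Omg"
  by (simp_all add: step_def)

lemma funpow_step_Dai [simp]: "(step ^^ n) Dai = Dai"
  and funpow_step_Omg [simp]: "(step ^^ n) Omg = Omg"
  by (induct n) auto

lemma nfP_Dai [simp]: "nfP Dai = Dai"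
proof -
  have conv: "conv_to Dai = (\<lambda>Q. Q = Dai)"
    by (auto simp: conv_to_def is_cut_def intro: exI[of _ 0])
  show ?thesis by (subst nfP.code) (simp add: conv)
qed

lemma nfP_Omg [simp]: "nfP Omg = Omg"
proof -
  have conv: "conv_to Omg = (\<lambda>Q. False)"
    by (auto simp: conv_to_def)
  show ?thesis by (subst nfP.code) (simp add: conv)
qed

lemma conv_to_step: "is_cut P \<Longrightarrow> conv_to P = conv_to (step P)"
proof (rule ext)
  fix Q assume cut: "is_cut P"
  have "(\<exists>n. (step ^^ n) P = Q \<and> \<not> is_cut Q) \<longleftrightarrow> (\<exists>n. (step ^^ n) (step P) = Q \<and> \<not> is_cut Q)"
  proof
    assume "\<exists>n. (step ^^ n) P = Q \<and> \<not> is_cut Q"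
    then obtain n where n: "(step ^^ n) P = Q" "\<not> is_cut Q" by blast
    with cut obtain m where "n = Suc m" by (cases n) auto
    then show "\<exists>n. (step ^^ n) (step P) = Q \<and> \<not> is_cut Q"
      using n by (auto simp only: funpow_Suc_right o_apply)
  next
    assume "\<exists>n. (step ^^ n) (step P) = Q \<and> \<not> is_cut Q"
    then show "\<exists>n. (step ^^ n) P = Q \<and> \<not> is_cut Q"
      by (metis funpow_Suc_right o_apply)
  qed
  then show "conv_to P Q = conv_to (step P) Q"
    unfolding conv_to_def by blast
qed

lemma nfP_step: "is_cut P \<Longrightarrow> nfP P = nfP (step P)"
  using nfP.code[of P] nfP.code[of "step P"] conv_to_step[of P] by simp

lemma converges_cut_iff: "converges (Act (Sm g) b Ms) \<longleftrightarrow> converges (openP Ms (g b))"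
  unfolding converges_def by (subst nfP_step) (auto simp: is_cut_def step_def)

lemma converges_Dai [simp]: "converges Dai"
  and not_converges_Omg [simp]: "\<not> converges Omg"
  by (auto simp: converges_def)

lemma openP_Dai [simp]: "openP Ms Dai = Dai"
  and openP_Omg [simp]: "openP Ms Omg = Omg"
  by (simp_all add: openP_def)

section \<open>Well-formed, closed and atomic designs\<close>

inductive_cases wfP_ActE: "Defs.wfP ar c (Act N a Ms)"
inductive_cases wfN_VrE: "wfN ar c (Vr v)"
inductive_cases wfN_SmE: "wfN ar c (Sm f)"
inductive_cases psubP_DaiE: "psubP Q Dai"
inductive_cases psubP_OmgE: "psubP Q Omg"
inductive_cases psubP_ActE: "psubP Q (Act N a Ms)"
inductive_cases psubN_VrE: "psubN Q (Vr v)"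
inductive_cases psubN_SmE: "psubN Q (Sm f)"

lemma psub_simps [simp]:
  "psubP Q Dai \<longleftrightarrow> Q = Dai" "psubP Q Omg \<longleftrightarrow> Q = Omg"
  "psubP Q (Act N a Ms) \<longleftrightarrow> Q = Act N a Ms \<or> psubN Q N \<or> (\<exists>M\<in>set Ms. psubN Q M)"
  "\<not> psubN Q (Vr v)"
  by (auto elim: psubP_DaiE psubP_OmgE psubP_ActE psubN_VrE intro: psubP_psubN.intros)

lemma psubN_Sm [simp]: "psubN Q (Sm f) \<longleftrightarrow> (\<exists>a. psubP Q (f a))"
  by (auto elim!: psubN_SmE intro: psubP_psubN.intros)

lemma wf_occ_Bd:
  fixes P :: "'n pos" and N :: "'n neg"
  shows "occP e (Bd k l) P \<Longrightarrow> Defs.wfP ar c P \<Longrightarrow> k < e + length c \<and> (e \<le> k \<longrightarrow> l < c ! (k - e))"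
    and "occN e (Bd k l) N \<Longrightarrow> wfN ar c N \<Longrightarrow> k < e + length c \<and> (e \<le> k \<longrightarrow> l < c ! (k - e))"
proof (induct e "Bd k l" P and e "Bd k l" N arbitrary: c and c rule: occP_occN.inducts)
  case 1
  then show ?case by (auto elim: wfN_VrE)
next
  case (4 e f a)
  then have "Defs.wfP ar (ar a # c) (f a)" by (auto elim: wfN_SmE)
  with 4(2) have "k < e + length (ar a # c) \<and> (e \<le> k \<longrightarrow> l < (ar a # c) ! (k - e))"
    by blast
  moreover have "Suc e \<le> k \<Longrightarrow> k - e = Suc (k - Suc e)" by arith
  ultimately show ?case by auto
qed (auto elim!: wfP_ActE)

lemma wfP_Nil_occ_Bd: "Defs.wfP ar [] P \<Longrightarrow> occP e (Bd k l) P \<Longrightarrow> k < e"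
  using wf_occ_Bd(1) by fastforce

lemma wfN_Nil_occ_Bd: "wfN ar [] N \<Longrightarrow> occN e (Bd k l) N \<Longrightarrow> k < e"
  using wf_occ_Bd(2) by fastforce

lemma wf_subst_coinduct:
  fixes s :: "nat \<Rightarrow> bvar \<Rightarrow> 'n neg option"
  assumes var: "\<And>c0 w. wfN ar (c0 @ c) (Vr w) \<Longrightarrow> wfN ar (c0 @ c') (substN s (length c0) (Vr w))"
  shows "(\<forall>ar' d P'. (\<exists>c0 P. ar' = ar \<and> d = c0 @ c' \<and> P' = substP s (length c0) P
        \<and> Defs.wfP ar (c0 @ c) P) \<longrightarrow> Defs.wfP ar' d P')
    \<and> (\<forall>ar' d N'. (\<exists>c0 N. ar' = ar \<and> d = c0 @ c' \<and> N' = substN s (length c0) N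
        \<and> wfN ar (c0 @ c) N) \<longrightarrow> wfN ar' d N')"
proof (rule wfP_wfN.coinduct, goal_cases)
  case (1 ar' d P')
  then obtain c0 P where h: "ar' = ar" "d = c0 @ c'" "P' = substP s (length c0) P"
    "Defs.wfP ar (c0 @ c) P" by blast
  then show ?case
    by (cases P) (auto elim!: wfP_ActE)
next
  case (2 ar' d N')
  then obtain c0 N where h: "ar' = ar" "d = c0 @ c'" "N' = substN s (length c0) N"
    "wfN ar (c0 @ c) N" by blast
  show ?case
  proof (cases N)
    case (Vr w)
    then have "wfN ar' d N'" using h var by simp
    then show ?thesis by (cases rule: wfN.cases) auto
  next
    case (Sm f)
    then have "\<forall>a. Defs.wfP ar (ar a # c0 @ c) (f a)" using h(4) by (auto elim: wfN_SmE)
    then show ?thesis using h Sm by (auto intro!: exI[of _ "ar _ # c0"])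
  qed
qed

lemma wfP_substP:
  fixes s :: "nat \<Rightarrow> bvar \<Rightarrow> 'n neg option"
  assumes "\<And>c0 w. wfN ar (c0 @ c) (Vr w) \<Longrightarrow> wfN ar (c0 @ c') (substN s (length c0) (Vr w))"
    and "Defs.wfP ar c P"
  shows "Defs.wfP ar c' (substP s 0 P)"
  using wf_subst_coinduct[OF assms(1)] assms(2) by (metis append_Nil list.size(3))

lemma closedP_iff_occ: "closedP P \<longleftrightarrow> (\<forall>e w. occP e w P \<longrightarrow> outer_var e w = None)"
  unfolding closedP_def vocP_iff_occ by auto (metis not_None_eq)

lemma closedN_iff_occ: "closedN N \<longleftrightarrow> (\<forall>e w. occN e w N \<longrightarrow> outer_var e w = None)"
  unfolding closedN_def vocN_iff_occ by auto (metis not_None_eq)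

lemma fvP_occ: "fvP P = {x. \<exists>e. occP e (Fr x) P}"
  unfolding fvP_def vocP_iff_occ outer_var_eq_Fr_iff by auto

lemma fvN_occ: "fvN N = {x. \<exists>e. occN e (Fr x) N}"
  unfolding fvN_def vocN_iff_occ outer_var_eq_Fr_iff by auto

lemma varsN_occ: "varsN N = {v. \<exists>e w. occN e w N \<and> outer_var e w = Some v}"
  unfolding varsN_def vocN_iff_occ by auto

lemma closedN_Sm_no_Fr: "closedN (Sm f) \<Longrightarrow> \<not> occP e (Fr x) (f a)"
  unfolding closedN_iff_occ by (metis occN_Sm outer_var.simps(1) option.distinct(1))

lemma closedP_substP:
  assumes "\<And>e w. occP e w P \<Longrightarrow> (case s e w of None \<Rightarrow> outer_var e w = None | Some M \<Rightarrow> closedN M)"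
  shows "closedP (substP s 0 P)"
  unfolding closedP_iff_occ
proof (intro allI impI)
  fix e v assume "occP e v (substP s 0 P)"
  from occP_substD[OF this] show "outer_var e v = None"
  proof (elim disjE exE conjE)
    fix e1 e2 w M assume "occP e1 w P" "s (0 + e1) w = Some M" "occN e2 v M" "e = e1 + e2"
    then show ?thesis using assms by (fastforce simp: closedN_iff_occ outer_var_eq_None_iff)
  qed (use assms in fastforce)
qed

lemma closedN_substN_id:
  "closedN M \<Longrightarrow> (\<And>D k l. k < D \<Longrightarrow> s D (Bd k l) = None) \<Longrightarrow> substN s d M = M"
  by (rule substN_id) (metis closedN_iff_occ add.commute outer_var_eq_None_iff trans_less_add2)

lemma closedP_Act_iff: "closedP (Act N a Ms) \<longleftrightarrow> closedN N \<and> (\<forall>M\<in>set Ms. closedN M)"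
  unfolding closedP_iff_occ closedN_iff_occ by auto

lemma closedN_imp_atomicN: "closedN N \<Longrightarrow> atomicN N"
  by (auto simp: atomicN_def closedN_def fvN_def)

lemma standardN_atomicN_imp_closedN: "standardN ar N \<Longrightarrow> atomicN N \<Longrightarrow> closedN N"
  unfolding closedN_iff_occ
proof (intro allI impI)
  fix e w assume N: "standardN ar N" "atomicN N" and o: "occN e w N"
  show "outer_var e w = None"
  proof (cases w)
    case (Fr x)
    then show ?thesis using N o by (auto simp: atomicN_def fvN_occ)
  next
    case (Bd k l)
    then show ?thesis using N o wfN_Nil_occ_Bd by (fastforce simp: standardN_def)
  qed
qed

lemma atomicP_Act: "\<forall>M\<in>set Ms. atomicN M \<Longrightarrow> atomicP x0 (Act (Vr (Fr x0)) a Ms)"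
  by (auto simp: atomicP_def atomicN_def fvP_occ fvN_occ)

lemma actset_atomicP:
  "\<forall>l<length Ss. \<forall>M\<in>Ss ! l. atomicN M \<Longrightarrow> T \<in> actset x0 a Ss \<Longrightarrow> atomicP x0 T"
  unfolding actset_def by (auto intro!: atomicP_Act simp: in_set_conv_nth)

lemma linear_Act_args_closedN:
  assumes wf: "\<forall>M\<in>set Ms. wfN ar [] M" and lin: "node_linear (Vr (Fr y)) b Ms"
    and fv: "fvP (Act (Vr (Fr y)) b Ms) \<subseteq> {y}" and M: "M \<in> set Ms"
  shows "closedN M"
  unfolding closedN_iff_occ
proof (intro allI impI)
  fix e w assume o: "occN e w M"
  show "outer_var e w = None"
  proof (cases w)
    case (Fr x)
    then have "x = y" using o M fv by (auto simp: fvP_occ)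
    obtain j where j: "j < length Ms" "Ms ! j = M" using M by (meson in_set_conv_nth)
    (* the head variable y cannot occur again in an argument *)
    have "varsN ((Vr (Fr y) # Ms) ! 0) \<inter> varsN ((Vr (Fr y) # Ms) ! Suc j) = {}"
      using lin j unfolding node_linear_def by (metis Suc_less_eq length_Cons zero_less_Suc)
    moreover have "Fr y \<in> varsN (Vr (Fr y))" "Fr y \<in> varsN M"
      using o Fr \<open>x = y\<close> by (auto simp: varsN_occ outer_var_eq_Fr_iff)
    ultimately show ?thesis using j by auto
  next
    case (Bd k l)
    then show ?thesis using wfN_Nil_occ_Bd o wf M by fastforce
  qed
qed

lemma standardP_atomicP_cases:
  assumes "standardP ar P" "atomicP x0 P"
  obtains "P = Dai"
  | b Ms where "P = Act (Vr (Fr x0)) b Ms" "length Ms = ar b" "\<forall>M\<in>set Ms. closedN M \<and> standardN ar M"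
proof (cases P)
  case Omg
  then show ?thesis using assms by (simp add: standardP_def)
next
  case Dai
  then show ?thesis using that by simp
next
  case (Act N b Ms)
  have wf: "wfN ar [] N" "length Ms = ar b" "\<forall>M\<in>set Ms. wfN ar [] M"
    using assms Act by (auto simp: standardP_def elim: wfP_ActE)
  have node: "node_cutfree N b Ms" "node_linear N b Ms" "node_noid N b Ms"
    using assms Act by (auto simp: standardP_def nodes_ok_def)
  have fv: "fvP P \<subseteq> {x0}" using assms by (simp add: atomicP_def)
  obtain y where N: "N = Vr (Fr y)"
    using wf(1) node(1) by (cases N) (auto simp: node_cutfree_def elim: wfN_VrE)
  with fv Act have y: "y = x0" by (auto simp: fvP_occ)
  have "closedN M" if "M \<in> set Ms" for M
    using linear_Act_args_closedN[OF wf(3) _ _ that] node(2) fv Act N y by simp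
  moreover have "standardN ar M" if M: "M \<in> set Ms" "closedN M" for M
  proof -
    have "nodes_ok R (\<lambda>Q. psubN Q M)" if "nodes_ok R (\<lambda>Q. psubP Q P)" for R
      using that M Act by (auto simp: nodes_ok_def)
    then show ?thesis
      using assms(1) wf(3) M node(3) unfolding standardP_def standardN_def
      by (auto simp: closedN_def fvN_def node_noid_def)
  qed
  ultimately show ?thesis using that Act N y wf(2) by auto
qed

section \<open>Orthogonality\<close>

lemma mem_perpP_iff:
  "\<forall>T\<in>S. atomicP x0 T \<Longrightarrow>
    U \<in> perpP ar x0 S \<longleftrightarrow> standardN ar U \<and> atomicN U \<and> (\<forall>T\<in>S. orth_at x0 T U)"
  by (simp add: perpP_def)

lemma mem_perpN_iff:
  "\<forall>T\<in>S. atomicN T \<Longrightarrow>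
    U \<in> perpN ar x0 S \<longleftrightarrow> standardP ar U \<and> atomicP x0 U \<and> (\<forall>T\<in>S. orth_at x0 U T)"
  by (simp add: perpN_def)

lemma orth_at_Act_Sm_iff:
  assumes "closedN (Sm g)" "\<forall>M\<in>set Ms. closedN M"
  shows "orth_at x0 (Act (Vr (Fr x0)) b Ms) (Sm g) \<longleftrightarrow> converges (openP Ms (g b))"
proof -
  have "fsubstP [x0 \<mapsto> Sm g] (Act (Vr (Fr x0)) b Ms) = Act (Sm g) b Ms"
    unfolding fsubstP_def using assms(2) by (auto intro!: map_idI closedN_substN_id)
  then show ?thesis
    using assms unfolding orth_at_def by (simp add: closedP_Act_iff converges_cut_iff)
qed

lemma standardP_Dai: "standardP ar Dai"
  by (auto simp: standardP_def nodes_ok_def fvP_occ intro: wfP_wfN.intros)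

lemma atomicP_Dai: "atomicP x0 Dai"
  by (auto simp: atomicP_def fvP_occ)

lemma orth_at_Dai: "orth_at x0 Dai N"
  by (simp add: orth_at_def fsubstP_def closedP_iff_occ)

lemma Dai_in_perpN: "\<forall>T\<in>S. atomicN T \<Longrightarrow> Dai \<in> perpN ar x0 S"
  by (simp add: perpN_def standardP_Dai atomicP_Dai orth_at_Dai)

definition DaiN :: "'n neg" where
  "DaiN = Sm (\<lambda>_. Dai)"

lemma closedN_DaiN: "closedN DaiN"
  by (simp add: DaiN_def closedN_iff_occ)

lemma standardN_DaiN: "standardN ar DaiN"
  unfolding standardN_def DaiN_def
  by (auto simp: nodes_ok_def fvN_occ intro!: wfP_wfN.intros)

lemma orth_at_DaiN: "standardP ar P \<Longrightarrow> atomicP x0 P \<Longrightarrow> orth_at x0 P DaiN"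
  by (erule standardP_atomicP_cases)
    (auto simp: orth_at_Dai orth_at_Act_Sm_iff closedN_DaiN[unfolded DaiN_def] DaiN_def)

lemma a_behP_perpP_nonempty:
  assumes "a_behP ar x0 B"
  shows "perpP ar x0 B \<noteq> {}"
proof -
  have "\<forall>T\<in>B. standardP ar T \<and> atomicP x0 T" using assms unfolding a_behP_def by blast
  then have "DaiN \<in> perpP ar x0 B"
    by (auto simp: mem_perpP_iff standardN_DaiN closedN_DaiN closedN_imp_atomicN orth_at_DaiN)
  then show ?thesis by blast
qed

lemma perpN_antimono:
  "S \<subseteq> S' \<Longrightarrow> \<forall>T\<in>S'. atomicN T \<Longrightarrow> perpN ar x0 S' \<subseteq> perpN ar x0 S"
  by (auto simp: perpN_def)

lemma perpP_UN:
  assumes "\<forall>i\<in>I. \<forall>T\<in>S i. atomicP x0 T"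
  shows "perpP ar x0 (\<Union>i\<in>I. S i) = {U. standardN ar U \<and> atomicN U} \<inter> (\<Inter>i\<in>I. perpP ar x0 (S i))"
  using assms by (auto simp: perpP_def)

lemma a_behN_memD:
  assumes "a_behN ar x0 B" "M \<in> B"
  shows "standardN ar M \<and> atomicN M \<and> closedN M"
proof -
  have "\<forall>T\<in>B. standardN ar T \<and> atomicN T" using assms(1) unfolding a_behN_def by (rule conjunct1)
  then show ?thesis using assms(2) standardN_atomicN_imp_closedN by blast
qed

lemma a_behN_perpN_memD:
  assumes "a_behN ar x0 B" "Q \<in> perpN ar x0 B"
  shows "standardP ar Q \<and> atomicP x0 Q \<and> (\<forall>M\<in>B. orth_at x0 Q M)"
proof -
  have "\<forall>M\<in>B. atomicN M" using a_behN_memD[OF assms(1)] by blast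
  then show ?thesis using assms(2) by (simp add: mem_perpN_iff)
qed

lemma a_behN_mem_iff:
  assumes "a_behN ar x0 B"
  shows "M \<in> B \<longleftrightarrow> standardN ar M \<and> atomicN M \<and> (\<forall>Q\<in>perpN ar x0 B. orth_at x0 Q M)"
proof -
  have "B = perpP ar x0 (perpN ar x0 B)" using assms by (simp add: a_behN_def)
  moreover have "\<forall>Q\<in>perpN ar x0 B. atomicP x0 Q" using a_behN_perpN_memD[OF assms] by blast
  ultimately show ?thesis by (metis mem_perpP_iff)
qed

lemma a_behP_perpP_memD:
  assumes "a_behP ar x0 B" "M \<in> perpP ar x0 B"
  shows "standardN ar M \<and> atomicN M \<and> closedN M \<and> (\<forall>P\<in>B. orth_at x0 P M)"
proof -
  have "\<forall>P\<in>B. atomicP x0 P" using assms(1) unfolding a_behP_def by blast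
  then show ?thesis using assms(2) by (auto simp: mem_perpP_iff intro: standardN_atomicN_imp_closedN)
qed

section \<open>Substitutions that rename variables\<close>

inductive psub_depthP :: "nat \<Rightarrow> 'n pos \<Rightarrow> 'n pos \<Rightarrow> bool"
  and psub_depthN :: "nat \<Rightarrow> 'n pos \<Rightarrow> 'n neg \<Rightarrow> bool" where
  "psub_depthP 0 P P"
| "psub_depthN e Q N \<Longrightarrow> psub_depthP e Q (Act N a Ms)"
| "M \<in> set Ms \<Longrightarrow> psub_depthN e Q M \<Longrightarrow> psub_depthP e Q (Act N a Ms)"
| "psub_depthP e Q (f a) \<Longrightarrow> psub_depthN (Suc e) Q (Sm f)"

lemma psub_depth_imp_psub:
  fixes P :: "'n pos" and N :: "'n neg"
  shows "psub_depthP e Q P \<Longrightarrow> psubP Q P" and "psub_depthN e Q N \<Longrightarrow> psubN Q N"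
  by (induct rule: psub_depthP_psub_depthN.inducts) (auto intro: psubP_psubN.intros)

lemma occ_psub_depth:
  fixes P :: "'n pos" and N :: "'n neg"
  shows "psub_depthP e Q P \<Longrightarrow> occP e' w Q \<Longrightarrow> occP (e + e') w P"
    and "psub_depthN e Q N \<Longrightarrow> occP e' w Q \<Longrightarrow> occN (e + e') w N"
  by (induct rule: psub_depthP_psub_depthN.inducts) auto

definition renaming :: "(nat \<Rightarrow> bvar \<Rightarrow> 'n neg option) \<Rightarrow> bool" where
  "renaming s \<longleftrightarrow> (\<forall>D v M. s D v = Some M \<longrightarrow> (\<exists>w. M = Vr w))"

definition renamed_var :: "(nat \<Rightarrow> bvar \<Rightarrow> 'n neg option) \<Rightarrow> nat \<Rightarrow> bvar \<Rightarrow> bvar" where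
  "renamed_var s D w = (case s D w of Some (Vr w') \<Rightarrow> w' | _ \<Rightarrow> w)"

(* vars_at_depth e P: the variables free in the subtrees of P at binder depth e, seen from
   the roots of those subtrees. *)
definition vars_at_depth :: "nat \<Rightarrow> 'n pos \<Rightarrow> bvar set" where
  "vars_at_depth e P = {v. \<exists>e' w. occP (e + e') w P \<and> outer_var e' w = Some v}"

lemma psub_subst_renaming_induct:
  fixes X :: "'n pos" and Y :: "'n neg"
  assumes s: "renaming s"
  shows "psubP Q' X \<Longrightarrow> X = substP s d P \<Longrightarrow> \<exists>Q e. psub_depthP e Q P \<and> Q' = substP s (d + e) Q"
    and "psubN Q' Y \<Longrightarrow> Y = substN s d N \<Longrightarrow> \<exists>Q e. psub_depthN e Q N \<and> Q' = substP s (d + e) Q"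
proof (induct arbitrary: d P and d N rule: psubP_psubN.inducts)
  case (1 P)
  then show ?case by (metis add_0_right psub_depthP_psub_depthN.intros(1))
next
  case (2 Q N a Ms)
  then obtain N0 Ms0 where "P = Act N0 a Ms0" "N = substN s d N0"
    by (cases P) auto
  with 2(2) show ?case by (blast intro: psub_depthP_psub_depthN.intros)
next
  case (3 M Ms Q N a)
  then obtain N0 Ms0 M0 where "P = Act N0 a Ms0" "M0 \<in> set Ms0" "M = substN s d M0"
    by (cases P) auto
  with 3(3) show ?case by (blast intro: psub_depthP_psub_depthN.intros)
next
  case (4 Q f a)
  (* a renaming never substitutes a sum for a variable *)
  then obtain f0 where f0: "N = Sm f0" "f = (\<lambda>a. substP s (Suc d) (f0 a))"
    using s substN_eq_Sm_iff[of s d N f] unfolding renaming_def by fastforce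
  then obtain Q0 e where "psub_depthP e Q0 (f0 a)" "Q = substP s (Suc d + e) Q0"
    using 4(2) by blast
  with f0 show ?case
    by (intro exI[of _ Q0] exI[of _ "Suc e"]) (auto intro: psub_depthP_psub_depthN.intros)
qed

lemma psubP_substP_renamingD:
  "renaming s \<Longrightarrow> psubP Q' (substP s d P) \<Longrightarrow> \<exists>Q e. psub_depthP e Q P \<and> Q' = substP s (d + e) Q"
  using psub_subst_renaming_induct(1) by blast

lemma occP_substP_renamingD:
  "renaming s \<Longrightarrow> occP e v (substP s D P) \<Longrightarrow> \<exists>w. occP e w P \<and> v = renamed_var s (D + e) w"
  by (drule occP_substD) (fastforce simp: renaming_def renamed_var_def)

lemma occN_substN_renamingD:
  "renaming s \<Longrightarrow> occN e v (substN s D N) \<Longrightarrow> \<exists>w. occN e w N \<and> v = renamed_var s (D + e) w"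
  by (drule occN_substD) (fastforce simp: renaming_def renamed_var_def)

lemma varsN_substN_renaming_subset:
  assumes s: "renaming s"
    and h: "\<forall>e w. occN e w X \<longrightarrow> outer_var e (renamed_var s (D + e) w) = map_option h (outer_var e w)"
  shows "varsN (substN s D X) \<subseteq> h ` varsN X"
proof
  fix v assume "v \<in> varsN (substN s D X)"
  then obtain e w' where o: "occN e w' (substN s D X)" "outer_var e w' = Some v"
    by (auto simp: varsN_occ)
  then obtain w where w: "occN e w X" "w' = renamed_var s (D + e) w"
    using occN_substN_renamingD[OF s] by blast
  then have "map_option h (outer_var e w) = Some v" using h o(2) by auto
  then show "v \<in> h ` varsN X" using w(1) by (auto simp: varsN_occ)
qed

lemma node_linear_substN_renaming:
  assumes s: "renaming s" and lin: "node_linear N a Ms"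
    and h: "\<forall>X\<in>set (N # Ms). \<forall>e w. occN e w X \<longrightarrow>
      outer_var e (renamed_var s (D + e) w) = map_option h (outer_var e w)"
    and inj: "inj_on h (\<Union>X\<in>set (N # Ms). varsN X)"
  shows "node_linear (substN s D N) a (map (substN s D) Ms)"
  unfolding node_linear_def
proof (intro allI impI)
  let ?L = "N # Ms"
  fix i j assume ij: "i < j \<and> j < length (substN s D N # map (substN s D) Ms)"
  then have i: "i < length ?L" and j: "j < length ?L" by auto
  have sub: "varsN (substN s D (?L ! k)) \<subseteq> h ` varsN (?L ! k)" if "k < length ?L" for k
    using varsN_substN_renaming_subset[OF s] h nth_mem[OF that] by blast
  have "varsN (?L ! i) \<inter> varsN (?L ! j) = {}"
    using lin ij unfolding node_linear_def by auto
  moreover have "varsN (?L ! i) \<union> varsN (?L ! j) \<subseteq> (\<Union>X\<in>set ?L. varsN X)"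
    using nth_mem[OF i] nth_mem[OF j] by blast
  ultimately have "h ` varsN (?L ! i) \<inter> h ` varsN (?L ! j) = {}"
    using inj by (simp add: inj_on_image_Int[symmetric])
  moreover have "substN s D N # map (substN s D) Ms = map (substN s D) ?L" by simp
  ultimately show "varsN ((substN s D N # map (substN s D) Ms) ! i)
      \<inter> varsN ((substN s D N # map (substN s D) Ms) ! j) = {}"
    using sub[OF i] sub[OF j] i j by (auto simp del: list.map)
qed

lemma node_cutfree_substN_renaming:
  "renaming s \<Longrightarrow> node_cutfree N a Ms \<Longrightarrow> node_cutfree (substN s D N) a (map (substN s D) Ms)"
  unfolding node_cutfree_def renaming_def substN_eq_Sm_iff by blast

lemma node_noid_substN:
  "node_noid N a Ms \<Longrightarrow> node_noid (substN s D N) a (map (substN s D) Ms)"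
  unfolding node_noid_def by (auto simp: substN_eq_Vr_iff)

(* The renamed variables seen from depth e must be an injective image h of the original ones,
   so that disjointness of the variable sets of the arguments, i.e. linearity, survives. *)
lemma nodes_substP_renaming:
  assumes s: "renaming s"
    and nodes: "\<And>N b Ms. psubP (Act N b Ms) P \<Longrightarrow>
      node_cutfree N b Ms \<and> node_noid N b Ms \<and> node_linear N b Ms"
    and shift: "\<And>e. \<exists>h. inj_on h (vars_at_depth e P)
      \<and> (\<forall>e' w. occP (e + e') w P \<longrightarrow>
          outer_var e' (renamed_var s (e + e') w) = map_option h (outer_var e' w))"
    and sub: "psubP (Act N' b Ms') (substP s 0 P)"
  shows "node_cutfree N' b Ms' \<and> node_noid N' b Ms' \<and> node_linear N' b Ms'"
proof -
  obtain R e where R: "psub_depthP e R P" "Act N' b Ms' = substP s e R"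
    using psubP_substP_renamingD[OF s sub] by auto
  then obtain N Ms where RA: "R = Act N b Ms" "N' = substN s e N" "Ms' = map (substN s e) Ms"
    by (cases R) auto
  have orig: "node_cutfree N b Ms" "node_noid N b Ms" "node_linear N b Ms"
    using nodes psub_depth_imp_psub(1)[OF R(1)] RA(1) by auto
  obtain h where inj: "inj_on h (vars_at_depth e P)"
    and h: "\<forall>e' w. occP (e + e') w P \<longrightarrow>
      outer_var e' (renamed_var s (e + e') w) = map_option h (outer_var e' w)"
    using shift by blast
  have occ: "occP (e + e') w P" if "X \<in> set (N # Ms)" "occN e' w X" for X e' w
    using occ_psub_depth(1)[OF R(1)] that RA(1) by auto
  have "(\<Union>X\<in>set (N # Ms). varsN X) \<subseteq> vars_at_depth e P"
    using occ by (fastforce simp: varsN_occ vars_at_depth_def)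
  then have "inj_on h (\<Union>X\<in>set (N # Ms). varsN X)"
    using inj_on_subset[OF inj] by blast
  then have "node_linear N' b Ms'"
    unfolding RA using h occ by (intro node_linear_substN_renaming[OF s orig(3)]) blast+
  then show ?thesis
    using node_cutfree_substN_renaming[OF s orig(1)] node_noid_substN[OF orig(2)] RA by simp
qed

section \<open>Opening a sum at fresh variables\<close>

definition open_subst :: "'n neg list \<Rightarrow> nat \<Rightarrow> bvar \<Rightarrow> 'n neg option" where
  "open_subst Ns = (\<lambda>d v. case v of
      Bd k l \<Rightarrow> (if k = d \<and> l < length Ns then Some (Ns ! l) else None)
    | Fr x \<Rightarrow> None)"

lemma openP_open_subst: "openP Ns = substP (open_subst Ns) 0"
  by (simp add: openP_def open_subst_def)

lemma renaming_open_subst_vars: "renaming (open_subst (map (\<lambda>x. Vr (Fr x)) xs))"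
  by (auto simp: renaming_def open_subst_def split: bvar.splits if_splits)

lemma renamed_var_open_subst_vars:
  "renamed_var (open_subst (map (\<lambda>x. Vr (Fr x)) xs)) D w =
    (case w of Bd k l \<Rightarrow> if k = D \<and> l < length xs then Fr (xs ! l) else w | Fr x \<Rightarrow> w)"
  by (auto simp: renamed_var_def open_subst_def split: bvar.splits)

lemma wfP_openP_vars:
  assumes "wfN ar [] (Sm f)" "length xs = ar a"
  shows "Defs.wfP ar [] (openP (map (\<lambda>x. Vr (Fr x)) xs) (f a))"
  unfolding openP_open_subst
proof (rule wfP_substP[where c = "[ar a]"])
  fix c0 w assume w: "wfN ar (c0 @ [ar a]) (Vr w)"
  show "wfN ar (c0 @ []) (substN (open_subst (map (\<lambda>x. Vr (Fr x)) xs)) (length c0) (Vr w))"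
  proof (cases w)
    case (Bd k l)
    with w have "k < Suc (length c0)" "l < (c0 @ [ar a]) ! k" by (auto elim: wfN_VrE)
    then show ?thesis
      using Bd assms(2) by (cases "k = length c0")
        (auto simp: open_subst_def nth_append intro: wfP_wfN.intros)
  qed (auto simp: open_subst_def intro: wfP_wfN.intros)
qed (use assms(1) in \<open>auto elim: wfN_SmE\<close>)

lemma fvP_openP_vars:
  fixes f :: "'n \<Rightarrow> 'n pos"
  assumes "closedN (Sm f)"
  shows "fvP (openP (map (\<lambda>x. Vr (Fr x)) xs) (f a)) \<subseteq> set xs"
proof
  let ?s = "open_subst (map (\<lambda>x. Vr (Fr x)) xs) :: nat \<Rightarrow> bvar \<Rightarrow> 'n neg option"
  fix x assume "x \<in> fvP (openP (map (\<lambda>x. Vr (Fr x)) xs) (f a))"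
  then obtain e where "occP e (Fr x) (substP ?s 0 (f a))"
    by (auto simp: fvP_occ openP_open_subst)
  then obtain w where "occP e w (f a)" "Fr x = renamed_var ?s e w"
    using occP_substP_renamingD[OF renaming_open_subst_vars] by fastforce
  then show "x \<in> set xs"
    using closedN_Sm_no_Fr[OF assms]
    by (cases w) (auto simp: renamed_var_open_subst_vars split: if_splits)
qed

(* Opening renames the variables Bd e l bound by the opened sum, seen at depth e, to Fr (xs ! l);
   since the sum is closed no other free variable occurs, and xs is distinct. *)
lemma nodes_openP_vars:
  fixes f :: "'n \<Rightarrow> 'n pos"
  assumes std: "standardN ar (Sm f)" and cl: "closedN (Sm f)" and xs: "distinct xs"
    and sub: "psubP (Act N' b Ms') (openP (map (\<lambda>x. Vr (Fr x)) xs) (f a))"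
  shows "node_cutfree N' b Ms' \<and> node_noid N' b Ms' \<and> node_linear N' b Ms'"
proof (rule nodes_substP_renaming[OF renaming_open_subst_vars])
  let ?s = "open_subst (map (\<lambda>x. Vr (Fr x)) xs) :: nat \<Rightarrow> bvar \<Rightarrow> 'n neg option"
  show "psubP (Act N' b Ms') (substP ?s 0 (f a))"
    using sub by (simp add: openP_open_subst)
next
  fix N b Ms assume "psubP (Act N b Ms) (f a)"
  then show "node_cutfree N b Ms \<and> node_noid N b Ms \<and> node_linear N b Ms"
    using std unfolding standardN_def nodes_ok_def psubN_Sm by blast
next
  let ?s = "open_subst (map (\<lambda>x. Vr (Fr x)) xs) :: nat \<Rightarrow> bvar \<Rightarrow> 'n neg option"
  fix e
  let ?h = "\<lambda>u. case u of Bd j l \<Rightarrow> if j = e \<and> l < length xs then Fr (xs ! l) else u | Fr x \<Rightarrow> u"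
  let ?V = "vars_at_depth e (f a)"
  have noFr: "\<not> occP e' (Fr x) (f a)" for e' x
    using closedN_Sm_no_Fr[OF cl] .
  have Bd: "\<forall>v\<in>?V. \<exists>j l. v = Bd j l"
    unfolding vars_at_depth_def
  proof clarify
    fix e' w v assume "occP (e + e') w (f a)" "outer_var e' w = Some v"
    then show "\<exists>j l. v = Bd j l" using noFr by (cases w) (auto split: if_splits)
  qed
  have "inj_on ?h ?V"
  proof (rule inj_onI)
    fix u1 u2 assume u: "u1 \<in> ?V" "u2 \<in> ?V" "?h u1 = ?h u2"
    with Bd obtain j1 l1 j2 l2 where "u1 = Bd j1 l1" "u2 = Bd j2 l2" by meson
    then show "u1 = u2"
      using u(3) xs by (auto simp: nth_eq_iff_index_eq split: if_splits)
  qed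
  moreover have "\<forall>e' w. occP (e + e') w (f a) \<longrightarrow>
      outer_var e' (renamed_var ?s (e + e') w) = map_option ?h (outer_var e' w)"
    using noFr by (auto simp: renamed_var_open_subst_vars split: bvar.splits)
  ultimately show "\<exists>h. inj_on h ?V \<and> (\<forall>e' w. occP (e + e') w (f a) \<longrightarrow>
      outer_var e' (renamed_var ?s (e + e') w) = map_option h (outer_var e' w))"
    by blast
qed

lemma standardP_openP_vars:
  assumes "standardN ar (Sm f)" "closedN (Sm f)" "distinct xs" "length xs = ar a" "f a \<noteq> Omg"
  shows "standardP ar (openP (map (\<lambda>x. Vr (Fr x)) xs) (f a))"
proof -
  have "openP (map (\<lambda>x. Vr (Fr x)) xs) (f a) \<noteq> Omg"
    using assms(5) by (cases "f a") (auto simp: openP_def)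
  moreover have "finite (fvP (openP (map (\<lambda>x. Vr (Fr x)) xs) (f a)))"
    using fvP_openP_vars[OF assms(2)] by (rule finite_subset) simp
  moreover have "Defs.wfP ar [] (openP (map (\<lambda>x. Vr (Fr x)) xs) (f a))"
    using assms(1,4) by (intro wfP_openP_vars) (simp_all add: standardN_def)
  moreover have "node_cutfree N b Ms \<and> node_noid N b Ms \<and> node_linear N b Ms"
    if "psubP (Act N b Ms) (openP (map (\<lambda>x. Vr (Fr x)) xs) (f a))" for N b Ms
    using nodes_openP_vars[OF assms(1-3) that] .
  ultimately show ?thesis
    unfolding standardP_def nodes_ok_def by blast
qed

lemma closedP_openP:
  assumes wf: "wfN ar [] (Sm f)" and cl: "closedN (Sm f)"
    and Ns: "length Ns = ar a" "\<forall>N\<in>set Ns. closedN N"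
  shows "closedP (openP Ns (f a))"
  unfolding openP_open_subst
proof (rule closedP_substP)
  fix e w assume o: "occP e w (f a)"
  have wfa: "Defs.wfP ar [ar a] (f a)" using wf by (auto elim: wfN_SmE)
  have "outer_var (Suc e) w = None" using o cl by (auto simp: closedN_iff_occ)
  then obtain k l where w: "w = Bd k l" "k \<le> e" by (cases w) (auto split: if_splits)
  then have "k = e \<Longrightarrow> l < ar a" using wf_occ_Bd(1)[OF o[unfolded w(1)] wfa] by simp
  then show "case open_subst Ns e w of None \<Rightarrow> outer_var e w = None | Some M \<Rightarrow> closedN M"
    using w Ns by (auto simp: open_subst_def)
qed

lemma fsubstP_openP_vars:
  assumes cl: "closedN (Sm f)" and dom: "set xs \<subseteq> dom \<sigma>"
  shows "fsubstP \<sigma> (openP (map (\<lambda>x. Vr (Fr x)) xs) (f a)) = openP (map (\<lambda>x. the (\<sigma> x)) xs) (f a)"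
  unfolding fsubstP_def openP_open_subst
proof (rule substP_comp)
  have "\<forall>l<length xs. \<exists>M. \<sigma> (xs ! l) = Some M" using dom by (auto dest!: nth_mem)
  moreover fix e w assume "occP e w (f a)"
  ultimately show "substN (\<lambda>d v. case v of Fr x \<Rightarrow> \<sigma> x | Bd k l \<Rightarrow> None) (0 + e)
      (substN (open_subst (map (\<lambda>x. Vr (Fr x)) xs)) (0 + e) (Vr w))
    = substN (open_subst (map (\<lambda>x. the (\<sigma> x)) xs)) (0 + e) (Vr w)"
    using closedN_Sm_no_Fr[OF cl] dom by (cases w) (auto simp: open_subst_def)
qed

section \<open>Counter-designs\<close>

definition bind_subst :: "nat \<Rightarrow> nat \<Rightarrow> nat \<Rightarrow> bvar \<Rightarrow> 'n neg option" where
  "bind_subst y l = (\<lambda>d v. if v = Fr y then Some (Vr (Bd d l)) else None)"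

lemma bindP_bind_subst: "bindP y l = substP (bind_subst y l) 0"
  by (simp add: bindP_def bind_subst_def)

lemma renaming_bind_subst: "renaming (bind_subst y l)"
  by (auto simp: renaming_def bind_subst_def)

lemma renamed_var_bind_subst: "renamed_var (bind_subst y l) D w = (if w = Fr y then Bd D l else w)"
  by (auto simp: renamed_var_def bind_subst_def)

lemma wfP_bindP:
  assumes "Defs.wfP ar [] Q" "l < n"
  shows "Defs.wfP ar [n] (bindP y l Q)"
  unfolding bindP_bind_subst
proof (rule wfP_substP[where c = "[]"])
  fix c0 w assume w: "wfN ar (c0 @ []) (Vr w)"
  show "wfN ar (c0 @ [n]) (substN (bind_subst y l) (length c0) (Vr w))"
  proof (cases w)
    case (Bd k l')
    with w have "k < length c0" "l' < c0 ! k" by (auto elim: wfN_VrE)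
    then show ?thesis using Bd by (auto simp: bind_subst_def nth_append intro!: wfP_wfN.intros)
  qed (use assms(2) in \<open>auto simp: bind_subst_def intro!: wfP_wfN.intros\<close>)
qed (rule assms(1))

(* Binding renames Fr y, seen at depth e, to Bd e l; by well-formedness Bd e l does not occur
   there yet. *)
lemma nodes_bindP:
  fixes Q :: "'n pos"
  assumes std: "standardP ar Q" and sub: "psubP (Act N' b Ms') (bindP y l Q)"
  shows "node_cutfree N' b Ms' \<and> node_noid N' b Ms' \<and> node_linear N' b Ms'"
proof (rule nodes_substP_renaming[OF renaming_bind_subst])
  show "psubP (Act N' b Ms') (substP (bind_subst y l) 0 Q)"
    using sub by (simp add: bindP_bind_subst)
next
  fix N b Ms assume "psubP (Act N b Ms) Q"
  then show "node_cutfree N b Ms \<and> node_noid N b Ms \<and> node_linear N b Ms"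
    using std unfolding standardP_def nodes_ok_def by blast
next
  fix e
  let ?h = "\<lambda>u. if u = Fr y then Bd e l else u"
  let ?V = "vars_at_depth e Q"
  have wf: "Defs.wfP ar [] Q" using std by (simp add: standardP_def)
  have "Bd e l \<notin> ?V"
    unfolding vars_at_depth_def
  proof clarify
    fix e' w assume o: "occP (e + e') w Q" and "outer_var e' w = Some (Bd e l)"
    then obtain k where "w = Bd k l" "k = e + e'" by (cases w) (auto split: if_splits)
    then show False using wfP_Nil_occ_Bd[OF wf] o by blast
  qed
  then have "inj_on ?h ?V"
    by (auto simp: inj_on_def)
  moreover have "outer_var e' (renamed_var (bind_subst y l) (e + e') w) = map_option ?h (outer_var e' w)"
    for e' w by (cases w) (auto simp: renamed_var_bind_subst)
  ultimately show "\<exists>h. inj_on h ?V \<and> (\<forall>e' w. occP (e + e') w Q \<longrightarrow>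
      outer_var e' (renamed_var (bind_subst y l) (e + e') w) = map_option h (outer_var e' w))"
    by blast
qed

lemma openP_bindP:
  assumes "Defs.wfP ar [] Q" "l < length Ms"
  shows "openP Ms (bindP y l Q) = fsubstP [y \<mapsto> Ms ! l] Q"
  unfolding openP_open_subst bindP_bind_subst fsubstP_def
proof (rule substP_comp)
  fix e w assume "occP e w Q"
  then show "substN (open_subst Ms) (0 + e) (substN (bind_subst y l) (0 + e) (Vr w)) =
      substN (\<lambda>d v. case v of Fr x \<Rightarrow> [y \<mapsto> Ms ! l] x | Bd k l \<Rightarrow> None) (0 + e) (Vr w)"
    using assms wfP_Nil_occ_Bd[OF assms(1)]
    by (cases w) (auto simp: open_subst_def bind_subst_def)
qed

lemma closedP_fsubstP_single:
  assumes "Defs.wfP ar [] Q" "fvP Q \<subseteq> {y}" "closedN M"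
  shows "closedP (fsubstP [y \<mapsto> M] Q)"
  unfolding fsubstP_def
proof (rule closedP_substP)
  fix e w assume o: "occP e w Q"
  then have "\<forall>k l. w = Bd k l \<longrightarrow> k < e" using wfP_Nil_occ_Bd[OF assms(1)] by blast
  then show "case (case w of Fr x \<Rightarrow> [y \<mapsto> M] x | Bd k l \<Rightarrow> None) of
      None \<Rightarrow> outer_var e w = None | Some M \<Rightarrow> closedN M"
    using o assms(2,3) by (cases w) (auto simp: fvP_occ)
qed

definition counterE :: "('n \<times> nat list) set \<Rightarrow> nat \<Rightarrow> 'n \<Rightarrow> nat \<Rightarrow> 'n pos \<Rightarrow> 'n neg" where
  "counterE A y a l Q = Sm (\<lambda>b. if b = a then bindP y l Q else if b \<in> fst ` A then Dai else Omg)"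

lemma alphaE_C_eq:
  "alphaE_C ar x0 A Nb = {counterE A x0 a l Q | a xs l Q.
     (a, xs) \<in> A \<and> l < length xs \<and> Q \<in> perpN ar x0 (Nb (xs ! l))}"
  unfolding alphaE_C_def counterE_def by blast

lemma closedN_counterE:
  fixes Q :: "'n pos"
  assumes wf: "Defs.wfP ar [] Q" and fv: "fvP Q \<subseteq> {y}"
  shows "closedN (counterE A y a l Q)"
  unfolding closedN_iff_occ
proof clarify
  let ?s = "bind_subst y l :: nat \<Rightarrow> bvar \<Rightarrow> 'n neg option"
  fix e v assume "occN e v (counterE A y a l Q)"
  then obtain e' where e: "e = Suc e'" "occP e' v (substP ?s 0 Q)"
    by (auto simp: counterE_def bindP_bind_subst split: if_splits)
  then obtain w where "occP e' w Q" "v = renamed_var ?s e' w"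
    using occP_substP_renamingD[OF renaming_bind_subst] by fastforce
  moreover from this(1) have "\<forall>k l. w = Bd k l \<longrightarrow> k < e'"
    using wfP_Nil_occ_Bd[OF wf] by blast
  ultimately show "outer_var e v = None"
    using e fv by (cases w) (auto simp: renamed_var_bind_subst fvP_occ)
qed

lemma orth_at_counterE_iff:
  assumes "Defs.wfP ar [] Q" "fvP Q \<subseteq> {x0}" "\<forall>M\<in>set Ms. closedN M" "l < length Ms"
  shows "orth_at x0 (Act (Vr (Fr x0)) a Ms) (counterE A x0 a l Q) \<longleftrightarrow> orth_at x0 Q (Ms ! l)"
proof -
  have "closedN (counterE A x0 a l Q)" by (rule closedN_counterE[OF assms(1,2)])
  then have "orth_at x0 (Act (Vr (Fr x0)) a Ms) (counterE A x0 a l Q) \<longleftrightarrow>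
      converges (openP Ms (bindP x0 l Q))"
    unfolding counterE_def by (simp add: orth_at_Act_Sm_iff assms(3))
  also have "\<dots> \<longleftrightarrow> converges (fsubstP [x0 \<mapsto> Ms ! l] Q)"
    using openP_bindP[OF assms(1,4)] by simp
  also have "\<dots> \<longleftrightarrow> orth_at x0 Q (Ms ! l)"
    using closedP_fsubstP_single[OF assms(1,2)] assms(3,4) by (simp add: orth_at_def)
  finally show ?thesis .
qed

lemma orth_at_counterE_other_iff:
  assumes "Defs.wfP ar [] Q" "fvP Q \<subseteq> {x0}" "\<forall>M\<in>set Ms. closedN M" "b \<noteq> a"
  shows "orth_at x0 (Act (Vr (Fr x0)) b Ms) (counterE A x0 a l Q) \<longleftrightarrow> b \<in> fst ` A"
proof -
  have "closedN (counterE A x0 a l Q)" by (rule closedN_counterE[OF assms(1,2)])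
  then show ?thesis using assms(4) unfolding counterE_def by (simp add: orth_at_Act_Sm_iff assms(3))
qed

lemma standardN_counterE:
  assumes std: "standardP ar Q" and at: "atomicP y Q" and l: "l < ar a"
  shows "standardN ar (counterE A y a l Q)"
proof -
  have wf: "Defs.wfP ar [] Q" using std by (simp add: standardP_def)
  then have "wfN ar [] (counterE A y a l Q)"
    using wfP_bindP[OF wf l] by (auto simp: counterE_def intro!: wfP_wfN.intros)
  moreover have "closedN (counterE A y a l Q)"
    using closedN_counterE[OF wf] at by (simp add: atomicP_def)
  moreover have "node_cutfree N b Ms \<and> node_noid N b Ms \<and> node_linear N b Ms"
    if "psubN (Act N b Ms) (counterE A y a l Q)" for N b Ms
    using that nodes_bindP[OF std] by (auto simp: counterE_def split: if_splits)
  ultimately show ?thesis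
    by (auto simp: standardN_def nodes_ok_def closedN_def fvN_def counterE_def)
qed

section \<open>The counter-sets of a logical connective\<close>

lemma connective_actionD:
  "connective ar x0 zs AI AE \<Longrightarrow> (a, xs) \<in> AI \<union> AE \<Longrightarrow>
    distinct xs \<and> length xs = ar a \<and> set xs \<subseteq> set zs"
  unfolding connective_def by fast

lemma connective_action_unique:
  "connective ar x0 zs AI AE \<Longrightarrow> (a, xs) \<in> AI \<union> AE \<Longrightarrow> (a, ys) \<in> AI \<union> AE \<Longrightarrow> xs = ys"
  unfolding connective_def by fast

context
  fixes ar :: "'n \<Rightarrow> nat" and x0 :: nat and zs :: "nat list"
    and A0 :: "('n \<times> nat list) set" and Nb :: "nat \<Rightarrow> 'n neg set"
  assumes conn: "connective ar x0 zs A0 A0"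
    and N_beh: "\<forall>z \<in> set zs. a_behN ar x0 (Nb z)"
begin

lemma a_behN_action_arg: "(a, xs) \<in> A0 \<Longrightarrow> l < length xs \<Longrightarrow> a_behN ar x0 (Nb (xs ! l))"
  using connective_actionD[OF conn] N_beh by (meson UnI1 nth_mem subsetD)

lemma alphaE_C_memE:
  assumes "E \<in> alphaE_C ar x0 A0 Nb"
  obtains a xs l Q where "(a, xs) \<in> A0" "l < length xs" "Q \<in> perpN ar x0 (Nb (xs ! l))"
    "standardP ar Q" "atomicP x0 Q" "E = counterE A0 x0 a l Q"
  using assms a_behN_perpN_memD[OF a_behN_action_arg] unfolding alphaE_C_eq by blast

lemma closedN_alphaE_C: "E \<in> alphaE_C ar x0 A0 Nb \<Longrightarrow> closedN E"
  by (erule alphaE_C_memE) (auto simp: standardP_def atomicP_def intro!: closedN_counterE)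

lemma standardN_alphaE_C: "E \<in> alphaE_C ar x0 A0 Nb \<Longrightarrow> standardN ar E"
proof (erule alphaE_C_memE)
  fix a xs l Q
  assume "(a, xs) \<in> A0" "l < length xs" "standardP ar Q" "atomicP x0 Q" "E = counterE A0 x0 a l Q"
  then show ?thesis using connective_actionD[OF conn, of a xs] by (auto intro: standardN_counterE)
qed

lemma mem_perpN_alphaE_C_iff:
  "P \<in> perpN ar x0 (alphaE_C ar x0 A0 Nb) \<longleftrightarrow>
    standardP ar P \<and> atomicP x0 P \<and> (\<forall>E\<in>alphaE_C ar x0 A0 Nb. orth_at x0 P E)"
proof (rule mem_perpN_iff)
  show "\<forall>E\<in>alphaE_C ar x0 A0 Nb. atomicN E"
    using closedN_alphaE_C closedN_imp_atomicN by blast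
qed

(* The daimon lies in every orthogonal, so a(x).daimon + ... is a counter-design as soon as a
   has an argument; its other branches diverge. *)
lemma orth_alphaE_C_imp_name_mem:
  assumes orth: "\<forall>E\<in>alphaE_C ar x0 A0 Nb. orth_at x0 (Act (Vr (Fr x0)) b Ms) E"
    and Ms: "\<forall>M\<in>set Ms. closedN M" and a: "(a, xs) \<in> A0" "xs \<noteq> []"
  shows "b \<in> fst ` A0"
proof (cases "b = a")
  case True
  then show ?thesis using a by force
next
  case False
  have "\<forall>T\<in>Nb (xs ! 0). atomicN T"
    using a_behN_memD[OF a_behN_action_arg[OF a(1)]] a(2) by blast
  then have "counterE A0 x0 a 0 Dai \<in> alphaE_C ar x0 A0 Nb"
    unfolding alphaE_C_eq using a Dai_in_perpN by blast
  with orth have "orth_at x0 (Act (Vr (Fr x0)) b Ms) (counterE A0 x0 a 0 Dai)" by blast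
  moreover have "Defs.wfP ar [] Dai" "fvP Dai \<subseteq> {x0}"
    using standardP_Dai atomicP_Dai by (auto simp: standardP_def atomicP_def)
  ultimately show ?thesis using orth_at_counterE_other_iff[OF _ _ Ms False] by blast
qed

lemma orth_alphaE_C_imp_arg_mem:
  assumes orth: "\<forall>E\<in>alphaE_C ar x0 A0 Nb. orth_at x0 (Act (Vr (Fr x0)) b Ms) E"
    and Ms: "\<forall>M\<in>set Ms. closedN M \<and> standardN ar M"
    and b: "(b, ys) \<in> A0" "length Ms = length ys" and l: "l < length ys"
  shows "Ms ! l \<in> Nb (ys ! l)"
proof -
  have "orth_at x0 Q (Ms ! l)" if Q: "Q \<in> perpN ar x0 (Nb (ys ! l))" for Q
  proof -
    have "standardP ar Q" "atomicP x0 Q"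
      using a_behN_perpN_memD[OF a_behN_action_arg[OF b(1) l] Q] by auto
    moreover have "counterE A0 x0 b l Q \<in> alphaE_C ar x0 A0 Nb"
      unfolding alphaE_C_eq using b l Q by blast
    ultimately show ?thesis
      using orth orth_at_counterE_iff Ms b(2) l by (fastforce simp: standardP_def atomicP_def)
  qed
  moreover have "closedN (Ms ! l)" "standardN ar (Ms ! l)" using Ms b(2) l by auto
  ultimately show ?thesis
    using a_behN_mem_iff[OF a_behN_action_arg[OF b(1) l]] closedN_imp_atomicN by blast
qed

lemma perpN_alphaE_C_subset:
  assumes "\<exists>(a, xs) \<in> A0. xs \<noteq> []"
  shows "perpN ar x0 (alphaE_C ar x0 A0 Nb) \<subseteq> (\<Union>(a, xs) \<in> A0. actset x0 a (map Nb xs)) \<union> {Dai}"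
proof
  fix P assume "P \<in> perpN ar x0 (alphaE_C ar x0 A0 Nb)"
  then have P: "standardP ar P" "atomicP x0 P" "\<forall>E\<in>alphaE_C ar x0 A0 Nb. orth_at x0 P E"
    unfolding mem_perpN_alphaE_C_iff by auto
  from P(1,2) show "P \<in> (\<Union>(a, xs) \<in> A0. actset x0 a (map Nb xs)) \<union> {Dai}"
  proof (cases rule: standardP_atomicP_cases)
    case (2 b Ms)
    from assms obtain a xs where a: "(a, xs) \<in> A0" "xs \<noteq> []" by blast
    have orth: "\<forall>E\<in>alphaE_C ar x0 A0 Nb. orth_at x0 (Act (Vr (Fr x0)) b Ms) E"
      using P(3) 2(1) by simp
    have "b \<in> fst ` A0" using orth_alphaE_C_imp_name_mem[OF orth _ a] 2(3) by blast
    then obtain ys where ys: "(b, ys) \<in> A0" by force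
    then have len: "length Ms = length ys" using connective_actionD[OF conn, of b ys] 2(2) by simp
    have "\<forall>l<length ys. Ms ! l \<in> Nb (ys ! l)"
      using orth_alphaE_C_imp_arg_mem[OF orth _ ys len] 2(3) by blast
    then have "P \<in> actset x0 b (map Nb ys)" using 2(1) len by (simp add: actset_def)
    then show ?thesis using ys by blast
  qed simp
qed

lemma atomicP_actset_Nb:
  assumes "(a, xs) \<in> A0" "T \<in> actset x0 a (map Nb xs)"
  shows "atomicP x0 T"
  by (rule actset_atomicP[OF _ assms(2)]) (use a_behN_memD[OF a_behN_action_arg[OF assms(1)]] in auto)

lemma orth_at_actset_alphaE_C:
  assumes T: "T \<in> actset x0 a' (map Nb xs')" "(a', xs') \<in> A0"
    and E: "E \<in> alphaE_C ar x0 A0 Nb"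
  shows "orth_at x0 T E"
proof -
  obtain Ms where Ms: "T = Act (Vr (Fr x0)) a' Ms" "length Ms = length xs'"
    "\<forall>j<length xs'. Ms ! j \<in> Nb (xs' ! j)"
    using T(1) by (auto simp: actset_def)
  then have cl: "\<forall>M\<in>set Ms. closedN M"
    using a_behN_memD[OF a_behN_action_arg[OF T(2)]] by (metis in_set_conv_nth)
  obtain a xs l Q where Q: "(a, xs) \<in> A0" "l < length xs" "Q \<in> perpN ar x0 (Nb (xs ! l))"
    "standardP ar Q" "atomicP x0 Q" "E = counterE A0 x0 a l Q"
    using E by (rule alphaE_C_memE)
  then have wf: "Defs.wfP ar [] Q" "fvP Q \<subseteq> {x0}" by (auto simp: standardP_def atomicP_def)
  show ?thesis
  proof (cases "a' = a")
    case True
    then have "xs' = xs" using connective_action_unique[OF conn] Q(1) T(2) by blast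
    then have "orth_at x0 Q (Ms ! l)"
      using a_behN_perpN_memD[OF a_behN_action_arg[OF Q(1,2)] Q(3)] Ms Q(2) by auto
    then show ?thesis using orth_at_counterE_iff[OF wf cl] Ms Q(2,6) True \<open>xs' = xs\<close> by simp
  next
    case False
    then show ?thesis using orth_at_counterE_other_iff[OF wf cl False] Ms(1) Q(6) T(2) by force
  qed
qed

lemma alphaE_subset_perpN_alphaE_C: "alphaE ar x0 A0 Nb \<subseteq> perpN ar x0 (alphaE_C ar x0 A0 Nb)"
proof -
  let ?U = "\<Union>(a, xs) \<in> A0. actset x0 a (map Nb xs)"
  have U: "\<forall>T\<in>?U. atomicP x0 T"
    using atomicP_actset_Nb by blast
  have "alphaE_C ar x0 A0 Nb \<subseteq> perpP ar x0 ?U"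
  proof
    fix E assume E: "E \<in> alphaE_C ar x0 A0 Nb"
    have "atomicN E" using closedN_alphaE_C[OF E] by (rule closedN_imp_atomicN)
    then show "E \<in> perpP ar x0 ?U"
      using U standardN_alphaE_C[OF E] orth_at_actset_alphaE_C[OF _ _ E] by (auto simp: mem_perpP_iff)
  qed
  moreover have "\<forall>T\<in>perpP ar x0 ?U. atomicN T" using U by (simp add: mem_perpP_iff)
  ultimately show ?thesis
    unfolding alphaE_def by (rule perpN_antimono)
qed

end

context
  fixes ar :: "'n \<Rightarrow> nat" and x0 :: nat and zs :: "nat list"
    and A0 :: "('n \<times> nat list) set" and Pb :: "nat \<Rightarrow> 'n pos set"
  assumes conn: "connective ar x0 zs A0 A0"
    and P_beh: "\<forall>z \<in> set zs. a_behP ar x0 (Pb z)"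
begin

lemma a_behP_action_arg: "(a, xs) \<in> A0 \<Longrightarrow> l < length xs \<Longrightarrow> a_behP ar x0 (Pb (xs ! l))"
  using connective_actionD[OF conn] P_beh by (meson UnI1 nth_mem subsetD)

lemma atomicP_alphaI_C_actset:
  assumes "(a, xs) \<in> A0"
  shows "\<forall>T\<in>actset x0 a (map (\<lambda>z. perpP ar x0 (Pb z)) xs). atomicP x0 T"
  by (intro ballI actset_atomicP) (use a_behP_perpP_memD[OF a_behP_action_arg[OF assms]] in auto)

lemma alphaI_eq_perpP_alphaI_C: "alphaI ar x0 A0 Pb = perpP ar x0 (alphaI_C ar x0 A0 Pb)"
  unfolding alphaI_def alphaI_C_def
  using atomicP_alphaI_C_actset by (subst perpP_UN) auto

lemma perpP_alphaI_C_memD: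
  assumes "M \<in> perpP ar x0 (alphaI_C ar x0 A0 Pb)"
  shows "standardN ar M \<and> closedN M \<and> (\<forall>T\<in>alphaI_C ar x0 A0 Pb. orth_at x0 T M)"
proof -
  have "\<forall>T\<in>alphaI_C ar x0 A0 Pb. atomicP x0 T"
    using atomicP_alphaI_C_actset unfolding alphaI_C_def by blast
  then show ?thesis
    using assms by (auto simp: mem_perpP_iff intro: standardN_atomicN_imp_closedN)
qed

lemma perpP_alphaI_C_openP_closed_converges:
  assumes Sf: "Sm f \<in> perpP ar x0 (alphaI_C ar x0 A0 Pb)" and a: "(a, xs) \<in> A0"
    and Ns: "length Ns = length xs" "\<forall>l<length xs. Ns ! l \<in> perpP ar x0 (Pb (xs ! l))"
  shows "converges (openP Ns (f a)) \<and> closedP (openP Ns (f a))"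
proof -
  have S: "standardN ar (Sm f)" "closedN (Sm f)" "\<forall>T\<in>alphaI_C ar x0 A0 Pb. orth_at x0 T (Sm f)"
    using perpP_alphaI_C_memD[OF Sf] by auto
  have Ncl: "\<forall>N\<in>set Ns. closedN N"
  proof
    fix N assume "N \<in> set Ns"
    then obtain l where "l < length xs" "N = Ns ! l" using Ns(1) by (auto simp: in_set_conv_nth)
    then show "closedN N" using Ns(2) a_behP_perpP_memD[OF a_behP_action_arg[OF a]] by blast
  qed
  have "Act (Vr (Fr x0)) a Ns \<in> actset x0 a (map (\<lambda>z. perpP ar x0 (Pb z)) xs)"
    using Ns by (simp add: actset_def)
  then have "orth_at x0 (Act (Vr (Fr x0)) a Ns) (Sm f)"
    using S(3) a unfolding alphaI_C_def by blast
  then have conv: "converges (openP Ns (f a))" using orth_at_Act_Sm_iff[OF S(2) Ncl] by simp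
  have "wfN ar [] (Sm f)" using S(1) by (simp add: standardN_def)
  moreover have "length Ns = ar a" using Ns(1) connective_actionD[OF conn, of a xs] a by simp
  ultimately have "closedP (openP Ns (f a))" by (rule closedP_openP[OF _ S(2) _ Ncl])
  with conv show ?thesis ..
qed

lemma perpP_alphaI_C_branch_not_Omg:
  assumes Sf: "Sm f \<in> perpP ar x0 (alphaI_C ar x0 A0 Pb)" and a: "(a, xs) \<in> A0"
  shows "f a \<noteq> Omg"
proof -
  let ?Ns = "map (\<lambda>z. SOME N. N \<in> perpP ar x0 (Pb z)) xs"
  have "\<forall>l<length xs. ?Ns ! l \<in> perpP ar x0 (Pb (xs ! l))"
  proof (intro allI impI)
    fix l assume "l < length xs"
    then show "?Ns ! l \<in> perpP ar x0 (Pb (xs ! l))"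
      using a_behP_perpP_nonempty[OF a_behP_action_arg[OF a]] by (simp add: some_in_eq)
  qed
  then have "converges (openP ?Ns (f a))"
    using perpP_alphaI_C_openP_closed_converges[OF Sf a, of ?Ns] by simp
  then show ?thesis by (metis not_converges_Omg openP_Omg)
qed

lemma perpP_alphaI_C_branch_perp_anti:
  assumes Sf: "Sm f \<in> perpP ar x0 (alphaI_C ar x0 A0 Pb)" and a: "(a, xs) \<in> A0"
  shows "openP (map (\<lambda>x. Vr (Fr x)) xs) (f a)
    \<in> perp_anti ar (antiset xs (map (\<lambda>z. perpP ar x0 (Pb z)) xs))"
proof -
  have S: "standardN ar (Sm f)" "closedN (Sm f)"
    using perpP_alphaI_C_memD[OF Sf] by auto
  have "distinct xs" "length xs = ar a" using connective_actionD[OF conn, of a xs] a by auto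
  then have "standardP ar (openP (map (\<lambda>x. Vr (Fr x)) xs) (f a))"
    using standardP_openP_vars[OF S] perpP_alphaI_C_branch_not_Omg[OF Sf a] by blast
  moreover have "orth_anti (openP (map (\<lambda>x. Vr (Fr x)) xs) (f a)) \<sigma>"
    if \<sigma>: "\<sigma> \<in> antiset xs (map (\<lambda>z. perpP ar x0 (Pb z)) xs)" for \<sigma>
  proof -
    have "\<forall>l<length xs. \<exists>N\<in>perpP ar x0 (Pb (xs ! l)). \<sigma> (xs ! l) = Some N"
      using \<sigma> unfolding antiset_def by auto
    then have "\<forall>l<length xs. map (\<lambda>x. the (\<sigma> x)) xs ! l \<in> perpP ar x0 (Pb (xs ! l))"
      by auto
    then have "converges (openP (map (\<lambda>x. the (\<sigma> x)) xs) (f a))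
        \<and> closedP (openP (map (\<lambda>x. the (\<sigma> x)) xs) (f a))"
      using perpP_alphaI_C_openP_closed_converges[OF Sf a] by simp
    moreover have "set xs \<subseteq> dom \<sigma>" using \<sigma> by (simp add: antiset_def)
    ultimately show ?thesis
      unfolding orth_anti_def by (simp add: fsubstP_openP_vars[OF S(2)])
  qed
  ultimately show ?thesis unfolding perp_anti_def by blast
qed

end

theorem lemma15:
  fixes ar :: "'n \<Rightarrow> nat" and x0 :: nat and zs :: "nat list"
    and A0 :: "('n \<times> nat list) set"
    and Pb :: "nat \<Rightarrow> 'n pos set" and Nb :: "nat \<Rightarrow> 'n neg set"
  assumes conn: "connective ar x0 zs A0 A0"
    and P_beh: "\<forall>z \<in> set zs. a_behP ar x0 (Pb z)"
    and N_beh: "\<forall>z \<in> set zs. a_behN ar x0 (Nb z)"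
  shows "((\<exists>(a, xs) \<in> A0. xs \<noteq> []) \<longrightarrow>
           perpN ar x0 (alphaE_C ar x0 A0 Nb)
             \<subseteq> (\<Union>(a, xs) \<in> A0. actset x0 a (map Nb xs)) \<union> {Dai})
    \<and> alphaE ar x0 A0 Nb \<subseteq> perpN ar x0 (alphaE_C ar x0 A0 Nb)
    \<and> (\<forall>f. Sm f \<in> perpP ar x0 (alphaI_C ar x0 A0 Pb) \<longrightarrow>
           (\<forall>(a, xs) \<in> A0. openP (map (\<lambda>x. Vr (Fr x)) xs) (f a)
               \<in> perp_anti ar (antiset xs (map (\<lambda>z. perpP ar x0 (Pb z)) xs))))
    \<and> alphaI ar x0 A0 Pb = perpP ar x0 (alphaI_C ar x0 A0 Pb)"
  using perpN_alphaE_C_subset[OF conn N_beh] alphaE_subset_perpN_alphaE_C[OF conn N_beh]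
    perpP_alphaI_C_branch_perp_anti[OF conn P_beh] alphaI_eq_perpP_alphaI_C[OF conn P_beh]
  by blast

end
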